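(* Let $V$ be a real vector space of finite even dimension with nondegenerate quadratic form $Q$, $\sigma$ a real structure on $\mathbb{C}l(V)$, $e$ a primitive idempotent of $\mathbb{C}l(V)$ and $S_e=\mathbb{C}l(V)e$ the corresponding algebraic spinor module. (1) If $ee^{\times_\sigma}=0$, then the $\sigma$-product $(\cdot,\cdot)_\sigma$ vanishes identically on $S_e$ (hence is not a Krein product on $S_e$). (2) If $ee^{\times_\sigma}\neq0$, then (a) there exists a unique primitive idempotent $f\in\mathbb{C}l(V)$ such that $f^{\times_\sigma}=f$ and $S_e=S_f$; and (b) the restriction of $(\cdot,\cdot)_\sigma$ to $S_e$ is a nondegenerate hermitian form for which the representation $L$ of $\mathbb{C}l(V)$ on $S_e$ by left multiplication is $\sigma$-compatible.
   Context: $Cl(V,Q)$ is the real Clifford algebra with $v^2=+Q(v)$, $\mathbb{C}l(V)$ its complexification. A real structure is an involutive antilinear algebra automorphism of $\mathbb{C}l(V)$ stabilizing $V^{\mathbb{C}}$. $T$ is the linear antiautomorphism restricting to the identity on $V$; $a^{\times_\sigma}=\sigma(T(a))$. $\tau_n$ is the normalized trace (unique linear form with $\tau_n(ab)=\tau_n(ba)$, $\tau_n(1)=1$), and $(a,b)_\sigma=\tau_n(a^{\times_\sigma}b)$. A primitive idempotent is a nonzero idempotent that is not the sum of two nonzero orthogonal idempotents. A representation $L$ on a space with nondegenerate hermitian form $(\cdot,\cdot)'$ is $\sigma$-compatible if $(L(a)\psi,\phi)'=(\psi,L(a^{\times_\sigma})\phi)'$ for all $a,\psi,\phi$. *)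

theory Defs
  imports Complex_Main
begin

text \<open>
Concrete model of the complexified Clifford algebra of a nondegenerate real quadratic
space (V,Q) of dimension CARD('n).  We fix an orthogonal basis (e_i) of V indexed by a
finite linearly ordered type 'n with Q(e_i) = eps i, eps i in {1,-1} (Sylvester).
Elements of the complexified Clifford algebra are coefficient functions
a :: 'n set => complex, a = sum over S of a S e_S, where e_S = e_{s1}...e_{sk},
s1 < ... < sk.  Convention v^2 = +Q(v), i.e. e_i e_i = eps i.
\<close>

type_synonym 'n clf = "'n set \<Rightarrow> complex"

definition cl_zero :: "'n clf" where "cl_zero = (\<lambda>S. 0)"
definition cl_one :: "'n clf" where "cl_one = (\<lambda>S. if S = {} then 1 else 0)"
definition cl_add :: "'n clf \<Rightarrow> 'n clf \<Rightarrow> 'n clf" where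
  "cl_add a b = (\<lambda>S. a S + b S)"
definition cl_scale :: "complex \<Rightarrow> 'n clf \<Rightarrow> 'n clf" where
  "cl_scale c a = (\<lambda>S. c * a S)"

text \<open>e_S e_T = cl_sign eps S T * e_{S symmetric-difference T}\<close>
definition cl_sign :: "('n::{finite,linorder} \<Rightarrow> real) \<Rightarrow> 'n set \<Rightarrow> 'n set \<Rightarrow> complex" where
  "cl_sign eps S T =
     (-1) ^ card {(i, j). i \<in> S \<and> j \<in> T \<and> j < i} * (\<Prod>i\<in>S \<inter> T. complex_of_real (eps i))"

definition cl_mult :: "('n::{finite,linorder} \<Rightarrow> real) \<Rightarrow> 'n clf \<Rightarrow> 'n clf \<Rightarrow> 'n clf" where
  "cl_mult eps a b = (\<lambda>U. \<Sum>S\<in>UNIV. \<Sum>T\<in>UNIV.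
       if (S - T) \<union> (T - S) = U then cl_sign eps S T * a S * b T else 0)"

text \<open>The subspace V^C (complexification of V) inside the algebra.\<close>
definition cl_vec :: "'n clf set" where
  "cl_vec = {a. \<forall>S. card S \<noteq> 1 \<longrightarrow> a S = 0}"

definition cl_linear :: "('n clf \<Rightarrow> 'n clf) \<Rightarrow> bool" where
  "cl_linear f \<longleftrightarrow> (\<forall>a b. f (cl_add a b) = cl_add (f a) (f b)) \<and>
                     (\<forall>c a. f (cl_scale c a) = cl_scale c (f a))"

definition cl_linear_form :: "('n clf \<Rightarrow> complex) \<Rightarrow> bool" where
  "cl_linear_form f \<longleftrightarrow> (\<forall>a b. f (cl_add a b) = f a + f b) \<and>
                          (\<forall>c a. f (cl_scale c a) = c * f a)"

definition real_structure :: "('n::{finite,linorder} \<Rightarrow> real) \<Rightarrow> ('n clf \<Rightarrow> 'n clf) \<Rightarrow> bool" where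
  "real_structure eps \<sigma> \<longleftrightarrow>
     (\<forall>a b. \<sigma> (cl_add a b) = cl_add (\<sigma> a) (\<sigma> b)) \<and>
     (\<forall>c a. \<sigma> (cl_scale c a) = cl_scale (cnj c) (\<sigma> a)) \<and>
     (\<forall>a b. \<sigma> (cl_mult eps a b) = cl_mult eps (\<sigma> a) (\<sigma> b)) \<and>
     \<sigma> cl_one = cl_one \<and>
     bij \<sigma> \<and>
     (\<forall>a. \<sigma> (\<sigma> a) = a) \<and>
     (\<forall>v\<in>cl_vec. \<sigma> v \<in> cl_vec)"

definition cl_T :: "('n::{finite,linorder} \<Rightarrow> real) \<Rightarrow> 'n clf \<Rightarrow> 'n clf" where
  "cl_T eps = (THE T. cl_linear T \<and> bij T \<and> T cl_one = cl_one \<and>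
                 (\<forall>a b. T (cl_mult eps a b) = cl_mult eps (T b) (T a)) \<and>
                 (\<forall>v\<in>cl_vec. T v = v))"

definition cl_adj :: "('n::{finite,linorder} \<Rightarrow> real) \<Rightarrow> ('n clf \<Rightarrow> 'n clf) \<Rightarrow> 'n clf \<Rightarrow> 'n clf" where
  "cl_adj eps \<sigma> a = \<sigma> (cl_T eps a)"

definition cl_trace :: "('n::{finite,linorder} \<Rightarrow> real) \<Rightarrow> 'n clf \<Rightarrow> complex" where
  "cl_trace eps = (THE \<tau>. cl_linear_form \<tau> \<and>
                    (\<forall>a b. \<tau> (cl_mult eps a b) = \<tau> (cl_mult eps b a)) \<and> \<tau> cl_one = 1)"

definition sigma_prod :: "('n::{finite,linorder} \<Rightarrow> real) \<Rightarrow> ('n clf \<Rightarrow> 'n clf) \<Rightarrow> 'n clf \<Rightarrow> 'n clf \<Rightarrow> complex" where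
  "sigma_prod eps \<sigma> a b = cl_trace eps (cl_mult eps (cl_adj eps \<sigma> a) b)"

definition cl_idempotent :: "('n::{finite,linorder} \<Rightarrow> real) \<Rightarrow> 'n clf \<Rightarrow> bool" where
  "cl_idempotent eps e \<longleftrightarrow> cl_mult eps e e = e"

definition primitive_idempotent :: "('n::{finite,linorder} \<Rightarrow> real) \<Rightarrow> 'n clf \<Rightarrow> bool" where
  "primitive_idempotent eps e \<longleftrightarrow> cl_idempotent eps e \<and> e \<noteq> cl_zero \<and>
     \<not> (\<exists>f g. cl_idempotent eps f \<and> cl_idempotent eps g \<and> f \<noteq> cl_zero \<and> g \<noteq> cl_zero \<and>
             cl_mult eps f g = cl_zero \<and> cl_mult eps g f = cl_zero \<and> e = cl_add f g)"

definition spinor_module :: "('n::{finite,linorder} \<Rightarrow> real) \<Rightarrow> 'n clf \<Rightarrow> 'n clf set" where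
  "spinor_module eps e = range (\<lambda>a. cl_mult eps a e)"

end

theory Submission
  imports Defs
    "HOL-Analysis.Cartesian_Space"
    "HOL-Computational_Algebra.Fundamental_Theorem_Algebra"
    "HOL-Computational_Algebra.Polynomial_Factorial"
    "HOL-Computational_Algebra.Field_as_Ring"
begin

text \<open>
  In the monomial basis \<open>e\<^sub>S\<close> the reversion \<open>T\<close> acts by signs, and in even dimension every
  \<open>e\<^sub>S\<close> with \<open>S \<noteq> {}\<close> anticommutes with some generator \<open>e\<^sub>i\<close>. Hence every trace is the
  coefficient of \<open>1\<close>, the algebra is central, and the average \<open>\<Sum>\<^sub>S e\<^sub>S a e\<^sub>S\<^sup>-\<^sup>1 = 2\<^sup>n \<tau>(a)\<close>
  shows that it is prime. For a primitive idempotent \<open>e\<close> the corner \<open>e A e\<close> is \<open>\<complex> e\<close>: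
  an element of the corner minus a root of its minimal polynomial is nilpotent (another coprime
  factor would split \<open>e\<close>), the nilpotents of the corner form an ideal, and averaging shows that
  they have trace zero, so they vanish by nondegeneracy of \<open>\<tau>\<close>.

  The \<open>\<sigma>\<close>-product \<open>\<tau>(\<psi>\<^sup>\<times> \<phi>)\<close> is hermitian because \<open>\<tau>(a\<^sup>\<times>)\<close> is the conjugate of \<open>\<tau>(a)\<close>, and
  \<open>\<sigma>\<close>-compatible because \<open>(a b)\<^sup>\<times> = b\<^sup>\<times> a\<^sup>\<times>\<close>; if \<open>e e\<^sup>\<times> = 0\<close> the trace property makes it vanish
  on \<open>S\<^sub>e\<close>. If \<open>e e\<^sup>\<times> \<noteq> 0\<close>, the corner property gives \<open>\<psi> e\<^sup>\<times> \<noteq> 0\<close> for every nonzero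
  \<open>\<psi> \<in> S\<^sub>e\<close>, whence nondegeneracy, and it produces a self-adjoint idempotent \<open>f\<close> with
  \<open>e f = e\<close>, \<open>f e = f\<close>; such an \<open>f\<close> is primitive with \<open>S\<^sub>f = S\<^sub>e\<close>, and two self-adjoint
  idempotents with the same spinor module coincide.
\<close>

section \<open>Signs of products of basis monomials\<close>

lemma sym_diff_cancel_left [simp]: "sym_diff S (sym_diff S T) = T"
  by auto

lemma sym_diff_cancel_right [simp]: "sym_diff (sym_diff S T) T = S" "sym_diff T (sym_diff S T) = S"
  by auto

lemma sym_diff_eq_iff: "sym_diff S T = U \<longleftrightarrow> T = sym_diff S U"
  by auto

lemma sum_reindex_sym_diff:
  "(\<Sum>X\<in>(UNIV::'a::finite set set). f X) = (\<Sum>T\<in>UNIV. f (sym_diff S T))"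
  by (rule sum.reindex_bij_witness[of _ "sym_diff S" "sym_diff S"]) auto

lemma card_sym_diff_add:
  assumes "finite A" "finite B"
  shows "card (sym_diff A B) + 2 * card (A \<inter> B) = card A + card B"
proof -
  have "card (sym_diff A B) = card (A - B) + card (B - A)"
    by (rule card_Un_disjoint) (use assms in auto)
  moreover have "card A = card (A \<inter> B) + card (A - B)" "card B = card (A \<inter> B) + card (B - A)"
    using card_Int_Diff[of A B] card_Int_Diff[of B A] assms by (simp_all add: Int_commute)
  ultimately show ?thesis
    by simp
qed

lemma neg_one_power_eq: "even (a + b) \<Longrightarrow> ((-1::complex) ^ a) = (-1) ^ b"
  by (metis even_add neg_one_even_power neg_one_odd_power)

lemma neg_one_power_eq_neg: "odd (a + b) \<Longrightarrow> ((-1::complex) ^ a) = - ((-1) ^ b)"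
  by (cases "even a") (auto simp: even_add)

definition inversions :: "'n::linorder set \<Rightarrow> 'n set \<Rightarrow> nat" where
  "inversions S T = card {(i, j). i \<in> S \<and> j \<in> T \<and> j < i}"

definition eps_prod :: "('n \<Rightarrow> real) \<Rightarrow> 'n set \<Rightarrow> complex" where
  "eps_prod eps X = (\<Prod>i\<in>X. complex_of_real (eps i))"

lemma cl_sign_eq: "cl_sign eps S T = (-1) ^ inversions S T * eps_prod eps (S \<inter> T)"
  by (simp add: cl_sign_def inversions_def eps_prod_def)

lemma even_card_sym_diff_add:
  assumes "finite A" "finite B"
  shows "even (card (sym_diff A B) + card A + card B)"
  using card_sym_diff_add[OF assms] by (metis add.assoc dvd_triv_left even_add)

lemma even_inversions_sym_diff_left:
  fixes X Y U :: "'n::{finite,linorder} set"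
  shows "even (inversions (sym_diff X Y) U + inversions X U + inversions Y U)"
proof -
  let ?P = "\<lambda>X. {(i, j). i \<in> X \<and> j \<in> U \<and> j < i}"
  have "?P (sym_diff X Y) = sym_diff (?P X) (?P Y)"
    by auto
  then show ?thesis
    unfolding inversions_def using even_card_sym_diff_add[of "?P X" "?P Y"] by simp
qed

lemma even_inversions_sym_diff_right:
  fixes X Y U :: "'n::{finite,linorder} set"
  shows "even (inversions U (sym_diff X Y) + inversions U X + inversions U Y)"
proof -
  let ?P = "\<lambda>X. {(i, j). i \<in> U \<and> j \<in> X \<and> j < i}"
  have "?P (sym_diff X Y) = sym_diff (?P X) (?P Y)"
    by auto
  then show ?thesis
    unfolding inversions_def using even_card_sym_diff_add[of "?P X" "?P Y"] by simp
qed

lemma eps_prod_Un: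
  "finite A \<Longrightarrow> finite B \<Longrightarrow> A \<inter> B = {} \<Longrightarrow> eps_prod eps (A \<union> B) = eps_prod eps A * eps_prod eps B"
  by (simp add: eps_prod_def prod.union_disjoint)

text \<open>This two-cocycle identity is exactly what makes the multiplication associative.\<close>

lemma cl_sign_cocycle:
  fixes S T U :: "'n::{finite,linorder} set"
  shows "cl_sign eps S T * cl_sign eps (sym_diff S T) U
       = cl_sign eps T U * cl_sign eps S (sym_diff T U)"
proof -
  have "eps_prod eps (S \<inter> T) * eps_prod eps (sym_diff S T \<inter> U)
      = eps_prod eps ((S \<inter> T) \<union> (sym_diff S T \<inter> U))"
    by (rule eps_prod_Un[symmetric]) auto
  also have "(S \<inter> T) \<union> (sym_diff S T \<inter> U) = (T \<inter> U) \<union> (S \<inter> sym_diff T U)"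
    by auto
  also have "eps_prod eps \<dots> = eps_prod eps (T \<inter> U) * eps_prod eps (S \<inter> sym_diff T U)"
    by (rule eps_prod_Un) auto
  finally have prods: "eps_prod eps (S \<inter> T) * eps_prod eps (sym_diff S T \<inter> U)
      = eps_prod eps (T \<inter> U) * eps_prod eps (S \<inter> sym_diff T U)" .
  have "even ((inversions S T + inversions (sym_diff S T) U) + (inversions T U + inversions S (sym_diff T U)))"
    using even_inversions_sym_diff_left[of S T U]
      even_inversions_sym_diff_right[where U = S and X = T and Y = U]
    by (simp add: even_add) blast
  then have "(-1::complex) ^ inversions S T * (-1) ^ inversions (sym_diff S T) U
      = (-1) ^ inversions T U * (-1) ^ inversions S (sym_diff T U)"
    unfolding power_add[symmetric] by (rule neg_one_power_eq)
  with prods show ?thesis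
    unfolding cl_sign_eq by (simp add: mult_ac)
qed

section \<open>The Clifford algebra in the monomial basis\<close>

definition cl_basis :: "'n set \<Rightarrow> 'n clf" where
  "cl_basis S = (\<lambda>U. if U = S then 1 else 0)"

definition cl_sum :: "('i \<Rightarrow> 'n clf) \<Rightarrow> 'i set \<Rightarrow> 'n clf" where
  "cl_sum F I = (\<lambda>U. \<Sum>i\<in>I. F i U)"

lemma cl_add_apply: "cl_add a b U = a U + b U"
  by (simp add: cl_add_def)

lemma cl_scale_apply: "cl_scale c a U = c * a U"
  by (simp add: cl_scale_def)

lemma cl_zero_apply: "cl_zero U = 0"
  by (simp add: cl_zero_def)

lemma cl_sum_apply: "cl_sum F I U = (\<Sum>i\<in>I. F i U)"
  by (simp add: cl_sum_def)

lemmas cl_pointwise = cl_add_apply cl_scale_apply cl_zero_apply cl_sum_apply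

lemma cl_basis_apply: "cl_basis S U = (if U = S then 1 else 0)"
  by (simp add: cl_basis_def)

lemma cl_one_eq_basis: "cl_one = cl_basis {}"
  by (simp add: cl_one_def cl_basis_def)

lemma cl_add_zero [simp]: "cl_add cl_zero a = a" "cl_add a cl_zero = a"
  by (simp_all add: fun_eq_iff cl_pointwise)

lemma cl_scale_zero [simp]: "cl_scale c cl_zero = cl_zero" "cl_scale 0 a = cl_zero"
  by (simp_all add: fun_eq_iff cl_pointwise)

lemma cl_scale_one [simp]: "cl_scale 1 a = a"
  by (simp add: fun_eq_iff cl_pointwise)

lemma cl_scale_scale [simp]: "cl_scale c (cl_scale d a) = cl_scale (c * d) a"
  by (simp add: fun_eq_iff cl_pointwise)

lemma cl_scale_eq_zero_iff: "cl_scale c a = cl_zero \<longleftrightarrow> c = 0 \<or> a = cl_zero"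
  by (auto simp: fun_eq_iff cl_pointwise)

lemma cl_sum_empty [simp]: "cl_sum F {} = cl_zero"
  by (simp add: fun_eq_iff cl_pointwise)

lemma cl_sum_insert: "finite I \<Longrightarrow> i \<notin> I \<Longrightarrow> cl_sum F (insert i I) = cl_add (F i) (cl_sum F I)"
  by (simp add: fun_eq_iff cl_pointwise)

lemma cl_sum_lessThan_Suc_shift:
  "cl_sum F {..<Suc n} = cl_add (F 0) (cl_sum (\<lambda>i. F (Suc i)) {..<n})"
  by (simp only: cl_sum_def cl_add_def sum.lessThan_Suc_shift)

lemma cl_sum_nonzero: "cl_sum F I \<noteq> cl_zero \<Longrightarrow> \<exists>i\<in>I. F i \<noteq> cl_zero"
  by (auto simp: fun_eq_iff cl_pointwise intro!: sum.neutral)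

lemma cl_basis_expansion: "a = cl_sum (\<lambda>S. cl_scale (a S) (cl_basis S)) (UNIV::'n::finite set set)"
proof
  fix U
  have "(\<Sum>S\<in>UNIV. a S * cl_basis S U) = (\<Sum>S\<in>UNIV. if U = S then a S else 0)"
    by (rule sum.cong) (auto simp: cl_basis_apply)
  then show "a U = cl_sum (\<lambda>S. cl_scale (a S) (cl_basis S)) UNIV U"
    by (simp add: cl_pointwise)
qed

lemma cl_linear_form_zero: "cl_linear_form f \<Longrightarrow> f cl_zero = 0"
  unfolding cl_linear_form_def by (metis cl_scale_zero(2) mult_zero_left)

lemma cl_linear_form_sum:
  assumes "cl_linear_form f" "finite I"
  shows "f (cl_sum F I) = (\<Sum>i\<in>I. f (F i))"
  using assms(2)
  by induction (simp_all add: cl_sum_insert cl_linear_form_zero[OF assms(1)]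
                              assms(1)[unfolded cl_linear_form_def])

lemma cl_linear_zero: "cl_linear f \<Longrightarrow> f cl_zero = cl_zero"
  unfolding cl_linear_def by (metis cl_scale_zero(2))

lemma cl_linear_sum:
  assumes "cl_linear f" "finite I"
  shows "f (cl_sum F I) = cl_sum (\<lambda>i. f (F i)) I"
  using assms(2)
  by induction (simp_all add: cl_sum_insert cl_linear_zero[OF assms(1)]
                              assms(1)[unfolded cl_linear_def])

locale clifford =
  fixes eps :: "'n::{finite,linorder} \<Rightarrow> real"
  assumes eps_sign: "eps i = 1 \<or> eps i = -1"
begin

abbreviation cl_times :: "'n clf \<Rightarrow> 'n clf \<Rightarrow> 'n clf" (infixl "\<cdot>" 70)
  where "a \<cdot> b \<equiv> cl_mult eps a b"

abbreviation "sg \<equiv> cl_sign eps"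

lemma cl_sign_square: "sg S T * sg S T = 1"
proof -
  have "complex_of_real (eps i) * complex_of_real (eps i) = 1" for i
    using eps_sign[of i] by auto
  then have "eps_prod eps X * eps_prod eps X = 1" for X
    unfolding eps_prod_def prod.distrib[symmetric] by simp
  then show ?thesis
    unfolding cl_sign_eq by (simp add: mult_ac power_add[symmetric])
qed

lemma cl_sign_nonzero: "sg S T \<noteq> 0"
  using cl_sign_square[of S T] by auto

lemma cl_sign_empty [simp]: "sg {} T = 1" "sg S {} = 1"
  by (simp_all add: cl_sign_def)

lemma cl_mult_apply: "(a \<cdot> b) U = (\<Sum>S\<in>UNIV. sg S (sym_diff S U) * a S * b (sym_diff S U))"
proof -
  have "(a \<cdot> b) U = (\<Sum>S\<in>UNIV. \<Sum>T\<in>UNIV. if T = sym_diff S U then sg S T * a S * b T else 0)"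
    unfolding cl_mult_def by (simp add: sym_diff_eq_iff)
  then show ?thesis
    by (simp add: sum.delta')
qed

lemma mult_add_left: "cl_add a b \<cdot> c = cl_add (a \<cdot> c) (b \<cdot> c)"
  and mult_add_right: "a \<cdot> cl_add b c = cl_add (a \<cdot> b) (a \<cdot> c)"
  by (simp_all add: fun_eq_iff cl_mult_apply cl_pointwise sum.distrib algebra_simps)

lemma mult_scale_left: "cl_scale k a \<cdot> b = cl_scale k (a \<cdot> b)"
  and mult_scale_right: "a \<cdot> cl_scale k b = cl_scale k (a \<cdot> b)"
  by (simp_all add: fun_eq_iff cl_mult_apply cl_pointwise sum_distrib_left algebra_simps)

lemma mult_zero_left [simp]: "cl_zero \<cdot> a = cl_zero"
  and mult_zero_right [simp]: "a \<cdot> cl_zero = cl_zero"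
  by (simp_all add: fun_eq_iff cl_mult_apply cl_pointwise)

lemma mult_sum_left: "cl_sum F I \<cdot> b = cl_sum (\<lambda>i. F i \<cdot> b) I"
  and mult_sum_right: "a \<cdot> cl_sum F I = cl_sum (\<lambda>i. a \<cdot> F i) I"
  by (simp_all add: fun_eq_iff cl_mult_apply cl_pointwise sum_distrib_left sum_distrib_right
      algebra_simps sum.swap[of _ I])

lemma mult_basis: "cl_basis S \<cdot> cl_basis T = cl_scale (sg S T) (cl_basis (sym_diff S T))"
proof
  fix U
  have "(cl_basis S \<cdot> cl_basis T) U
      = (\<Sum>X\<in>UNIV. if X = S then sg X (sym_diff X U) * cl_basis T (sym_diff X U) else 0)"
    unfolding cl_mult_apply by (rule sum.cong) (auto simp: cl_basis_apply)
  then show "(cl_basis S \<cdot> cl_basis T) U = cl_scale (sg S T) (cl_basis (sym_diff S T)) U"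
    by (auto simp: sum.delta' cl_basis_apply cl_pointwise sym_diff_eq_iff)
qed

lemma mult_one_left [simp]: "cl_one \<cdot> a = a"
proof
  fix U
  have "(cl_one \<cdot> a) U = (\<Sum>X\<in>(UNIV::'n set set). if X = {} then a U else 0)"
    unfolding cl_mult_apply cl_one_def by (intro sum.cong) auto
  then show "(cl_one \<cdot> a) U = a U"
    by simp
qed

lemma mult_one_right [simp]: "a \<cdot> cl_one = a"
proof
  fix U
  have "(a \<cdot> cl_one) U = (\<Sum>X\<in>(UNIV::'n set set). if X = U then a U else 0)"
    unfolding cl_mult_apply cl_one_def by (intro sum.cong) (auto simp: sym_diff_eq_iff)
  then show "(a \<cdot> cl_one) U = a U"
    by simp
qed

lemma mult_assoc: "a \<cdot> b \<cdot> c = a \<cdot> (b \<cdot> c)"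
proof
  fix W
  let ?t = "\<lambda>S T. a S * b T * c (sym_diff T (sym_diff S W))"
  have "(a \<cdot> b \<cdot> c) W
      = (\<Sum>S\<in>UNIV. \<Sum>X\<in>UNIV. sg X (sym_diff X W) * sg S (sym_diff S X) * a S * b (sym_diff S X) * c (sym_diff X W))"
    unfolding cl_mult_apply by (subst sum.swap) (simp add: sum_distrib_left sum_distrib_right mult_ac)
  also have "\<dots> = (\<Sum>S\<in>UNIV. \<Sum>T\<in>UNIV. sg (sym_diff S T) (sym_diff (sym_diff S T) W)
      * sg S (sym_diff S (sym_diff S T)) * a S * b (sym_diff S (sym_diff S T)) * c (sym_diff (sym_diff S T) W))"
    by (rule sum.cong[OF refl], rule sum_reindex_sym_diff)
  also have "\<dots> = (\<Sum>S\<in>UNIV. \<Sum>T\<in>UNIV. sg (sym_diff S T) (sym_diff T (sym_diff S W)) * sg S T * ?t S T)"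
  proof (intro sum.cong refl)
    fix S T
    have "sym_diff (sym_diff S T) W = sym_diff T (sym_diff S W)"
      by auto
    then show "sg (sym_diff S T) (sym_diff (sym_diff S T) W) * sg S (sym_diff S (sym_diff S T)) * a S
        * b (sym_diff S (sym_diff S T)) * c (sym_diff (sym_diff S T) W)
      = sg (sym_diff S T) (sym_diff T (sym_diff S W)) * sg S T * ?t S T"
      by (simp add: mult_ac)
  qed
  also have "\<dots> = (\<Sum>S\<in>UNIV. \<Sum>T\<in>UNIV. sg S (sym_diff S W) * sg T (sym_diff T (sym_diff S W)) * ?t S T)"
    using cl_sign_cocycle[of eps S T "sym_diff T (sym_diff S W)" for S T] by (simp add: mult_ac)
  also have "\<dots> = (a \<cdot> (b \<cdot> c)) W"
    unfolding cl_mult_apply by (simp add: sum_distrib_left sum_distrib_right mult_ac)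
  finally show "(a \<cdot> b \<cdot> c) W = (a \<cdot> (b \<cdot> c)) W" .
qed

end

section \<open>Reversion and the normalized trace\<close>

definition reversion_sign :: "'n::linorder set \<Rightarrow> complex" where
  "reversion_sign S = (-1) ^ inversions S S"

definition reversion :: "'n::linorder clf \<Rightarrow> 'n clf" where
  "reversion a = (\<lambda>S. reversion_sign S * a S)"

definition scalar_part :: "'n clf \<Rightarrow> complex" where
  "scalar_part a = a {}"

lemma reversion_sign_square: "reversion_sign S * reversion_sign S = 1"
  by (simp add: reversion_sign_def power_add[symmetric])

lemma reversion_sign_singleton: "reversion_sign {i} = 1"
proof -
  have "{(a, j). a \<in> {i} \<and> j \<in> {i} \<and> j < a} = {}"
    by auto
  then show ?thesis
    by (simp only: reversion_sign_def inversions_def card.empty power_0)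
qed

lemma even_inversions_sym_diff_self:
  fixes S T :: "'n::{finite,linorder} set"
  shows "even (inversions (sym_diff S T) (sym_diff S T) + inversions S T
             + inversions S S + inversions T T + inversions T S)"
  using even_inversions_sym_diff_left[of S T "sym_diff S T"]
    even_inversions_sym_diff_right[where U = S and X = S and Y = T]
    even_inversions_sym_diff_right[where U = T and X = S and Y = T]
  unfolding even_add by argo

lemma reversion_reversion [simp]: "reversion (reversion a) = a"
  by (simp add: reversion_def fun_eq_iff mult.assoc[symmetric] reversion_sign_square)

lemma reversion_add: "reversion (cl_add a b) = cl_add (reversion a) (reversion b)"
  by (simp add: reversion_def fun_eq_iff algebra_simps cl_pointwise)

lemma reversion_scale: "reversion (cl_scale c a) = cl_scale c (reversion a)"
  by (simp add: reversion_def fun_eq_iff cl_pointwise)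

lemma cl_linear_reversion: "cl_linear reversion"
  by (simp add: cl_linear_def reversion_add reversion_scale)

lemma bij_reversion: "bij reversion"
  by (rule o_bij[of reversion]) (simp_all add: fun_eq_iff)

lemma reversion_one: "reversion cl_one = cl_one"
  by (simp add: reversion_def cl_one_def reversion_sign_def inversions_def fun_eq_iff)

lemma reversion_vec:
  assumes "v \<in> cl_vec"
  shows "reversion v = v"
proof
  fix S
  show "reversion v S = v S"
  proof (cases "card S = 1")
    case True
    then obtain i where "S = {i}"
      by (rule card_1_singletonE)
    then show ?thesis
      by (simp add: reversion_def reversion_sign_singleton)
  qed (use assms in \<open>simp add: reversion_def cl_vec_def\<close>)
qed

lemma reversion_basis: "reversion (cl_basis S) = cl_scale (reversion_sign S) (cl_basis S)"
  by (simp add: reversion_def fun_eq_iff cl_basis_apply cl_pointwise)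

lemma cl_linear_basis_ext:
  fixes f g :: "'n::finite clf \<Rightarrow> 'n clf"
  assumes "cl_linear f" "cl_linear g" "\<And>S. f (cl_basis S) = g (cl_basis S)"
  shows "f = g"
proof
  fix a
  have "f a = cl_sum (\<lambda>S. f (cl_scale (a S) (cl_basis S))) UNIV"
    by (subst cl_basis_expansion[of a]) (simp add: cl_linear_sum assms(1))
  also have "\<dots> = cl_sum (\<lambda>S. g (cl_scale (a S) (cl_basis S))) UNIV"
    using assms unfolding cl_linear_def by simp
  also have "\<dots> = g a"
    by (subst (2) cl_basis_expansion[of a]) (simp add: cl_linear_sum assms(2))
  finally show "f a = g a" .
qed

lemma cl_linear_form_basis_ext:
  fixes f g :: "'n::finite clf \<Rightarrow> complex"
  assumes "cl_linear_form f" "cl_linear_form g" "\<And>S. f (cl_basis S) = g (cl_basis S)"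
  shows "f = g"
proof
  fix a
  have "f a = (\<Sum>S\<in>UNIV. f (cl_scale (a S) (cl_basis S)))"
    by (subst cl_basis_expansion[of a]) (simp add: cl_linear_form_sum assms(1))
  also have "\<dots> = (\<Sum>S\<in>UNIV. g (cl_scale (a S) (cl_basis S)))"
    using assms unfolding cl_linear_form_def by simp
  also have "\<dots> = g a"
    by (subst (2) cl_basis_expansion[of a]) (simp add: cl_linear_form_sum assms(2))
  finally show "f a = g a" .
qed

lemma scalar_part_add: "scalar_part (cl_add a b) = scalar_part a + scalar_part b"
  by (simp add: scalar_part_def cl_pointwise)

lemma scalar_part_scale: "scalar_part (cl_scale c a) = c * scalar_part a"
  by (simp add: scalar_part_def cl_pointwise)

lemma cl_linear_form_scalar_part: "cl_linear_form scalar_part"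
  by (simp add: cl_linear_form_def scalar_part_add scalar_part_scale)

lemma scalar_part_one: "scalar_part cl_one = 1"
  by (simp add: scalar_part_def cl_one_def)

lemma scalar_part_basis: "scalar_part (cl_basis S) = (if S = {} then 1 else 0)"
  by (simp add: scalar_part_def cl_basis_apply)

lemma inversions_singleton_add:
  fixes T :: "'n::{finite,linorder} set"
  shows "inversions {i} T + inversions T {i} = card (T - {i})"
proof -
  have "inversions {i} T = card {j\<in>T. j < i}"
    unfolding inversions_def
    by (rule bij_betw_same_card[of snd]) (auto simp: bij_betw_def inj_on_def image_def)
  moreover have "inversions T {i} = card {j\<in>T. i < j}"
    unfolding inversions_def
    by (rule bij_betw_same_card[of fst]) (auto simp: bij_betw_def inj_on_def image_def)
  moreover have "card ({j\<in>T. j < i} \<union> {j\<in>T. i < j}) = card {j\<in>T. j < i} + card {j\<in>T. i < j}"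
    by (rule card_Un_disjoint) auto
  moreover have "{j\<in>T. j < i} \<union> {j\<in>T. i < j} = T - {i}"
    by auto
  ultimately show ?thesis
    by (simp only:)
qed

context clifford
begin

lemma reversion_sign_sym_diff:
  "reversion_sign (sym_diff S T) * sg S T = reversion_sign S * reversion_sign T * sg T S"
proof -
  have "(-1::complex) ^ (inversions (sym_diff S T) (sym_diff S T) + inversions S T)
      = (-1) ^ (inversions S S + inversions T T + inversions T S)"
    by (rule neg_one_power_eq) (use even_inversions_sym_diff_self[of S T] in \<open>simp add: add.assoc\<close>)
  then show ?thesis
    unfolding reversion_sign_def cl_sign_eq by (simp add: power_add mult_ac Int_commute)
qed

lemma reversion_mult: "reversion (a \<cdot> b) = reversion b \<cdot> reversion a"
proof
  fix U
  have "reversion (a \<cdot> b) U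
      = (\<Sum>S\<in>UNIV. reversion_sign U * sg S (sym_diff S U) * a S * b (sym_diff S U))"
    by (simp add: reversion_def cl_mult_apply sum_distrib_left mult_ac)
  also have "\<dots> = (\<Sum>S\<in>UNIV. sg (sym_diff S U) S * reversion_sign (sym_diff S U) * b (sym_diff S U)
      * reversion_sign S * a S)"
    using reversion_sign_sym_diff[of S "sym_diff S U" for S] by (simp add: mult_ac)
  also have "\<dots> = (\<Sum>T\<in>UNIV. sg T (sym_diff T U) * reversion_sign T * b T
      * reversion_sign (sym_diff T U) * a (sym_diff T U))"
    by (subst sum_reindex_sym_diff[where S = U]) (simp add: Un_commute)
  also have "\<dots> = (reversion b \<cdot> reversion a) U"
    by (simp add: reversion_def cl_mult_apply mult_ac)
  finally show "reversion (a \<cdot> b) U = (reversion b \<cdot> reversion a) U" .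
qed

lemma antiautomorphism_basis:
  assumes lin: "cl_linear T" and one: "T cl_one = cl_one"
    and anti: "\<And>a b. T (a \<cdot> b) = T b \<cdot> T a" and vec: "\<And>v. v \<in> cl_vec \<Longrightarrow> T v = v"
  shows "T (cl_basis S) = cl_scale (reversion_sign S) (cl_basis S)"
proof (induction S rule: finite_induct[OF finite])
  case 1
  then show ?case
    using one by (simp add: cl_one_eq_basis reversion_sign_def inversions_def)
next
  case (2 i S)
  have si: "sym_diff {i} S = insert i S"
    using 2 by auto
  have vec_i: "cl_basis {i} \<in> cl_vec"
    by (auto simp: cl_vec_def cl_basis_apply)
  have "cl_basis {i} \<cdot> cl_basis S = cl_scale (sg {i} S) (cl_basis (insert i S))"
    by (simp add: mult_basis si)
  then have split: "cl_basis (insert i S) = cl_scale (1 / sg {i} S) (cl_basis {i} \<cdot> cl_basis S)"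
    using cl_sign_nonzero[of "{i}" S] by simp
  have sign: "1 / sg {i} S * reversion_sign S * sg S {i} = reversion_sign (insert i S)"
    using reversion_sign_sym_diff[of "{i}" S] cl_sign_nonzero[of "{i}" S]
    by (simp add: si reversion_sign_singleton field_simps)
  have "T (cl_basis (insert i S)) = cl_scale (1 / sg {i} S) (T (cl_basis S) \<cdot> T (cl_basis {i}))"
    using lin anti unfolding split cl_linear_def by simp
  also have "\<dots> = cl_scale (1 / sg {i} S * reversion_sign S * sg S {i}) (cl_basis (insert i S))"
    using 2 vec vec_i si by (simp add: mult_scale_left mult_basis Un_commute)
  finally show ?case
    by (simp only: sign)
qed

lemma cl_T_eq_reversion: "cl_T eps = reversion"
  unfolding cl_T_def
proof (rule the_equality)
  fix T
  assume "cl_linear T \<and> bij T \<and> T cl_one = cl_one \<and> (\<forall>a b. T (a \<cdot> b) = T b \<cdot> T a)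
      \<and> (\<forall>v\<in>cl_vec. T v = v)"
  then show "T = reversion"
    using antiautomorphism_basis[of T] cl_linear_reversion
    by (auto intro!: cl_linear_basis_ext simp: reversion_basis)
qed (use cl_linear_reversion bij_reversion reversion_one reversion_mult reversion_vec in blast)

lemma scalar_part_mult: "scalar_part (a \<cdot> b) = (\<Sum>S\<in>UNIV. sg S S * a S * b S)"
  by (simp add: scalar_part_def cl_mult_apply)

lemma scalar_part_commute: "scalar_part (a \<cdot> b) = scalar_part (b \<cdot> a)"
  by (simp add: scalar_part_mult mult_ac)

lemma scalar_part_nondegenerate:
  assumes "\<And>b. scalar_part (a \<cdot> b) = 0"
  shows "a = cl_zero"
proof
  fix S
  have "scalar_part (a \<cdot> cl_basis S) = (\<Sum>T\<in>UNIV. if T = S then sg S S * a S else 0)"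
    unfolding scalar_part_mult by (rule sum.cong) (auto simp: cl_basis_apply)
  then have "sg S S * a S = 0"
    using assms by simp
  then show "a S = cl_zero S"
    using cl_sign_nonzero[of S S] by (simp add: cl_pointwise)
qed

lemma anticommute_basis_singleton:
  assumes "odd (card (T - {i}))"
  shows "sg {i} T = - sg T {i}"
proof -
  have "(-1::complex) ^ inversions {i} T = - ((-1) ^ inversions T {i})"
    using assms by (intro neg_one_power_eq_neg) (simp add: inversions_singleton_add)
  then show ?thesis
    by (simp add: cl_sign_eq Int_commute)
qed

end

text \<open>Even dimension is used only here: it provides, for every nonempty \<open>T\<close>, a generator
  anticommuting with \<open>e\<^sub>T\<close>; in odd dimension the volume element would be central.\<close>

locale even_clifford = clifford eps for eps :: "'n::{finite,linorder} \<Rightarrow> real" +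
  assumes even_dim: "even (card (UNIV::'n set))"
begin

lemma ex_anticommuting_generator:
  assumes "T \<noteq> {}"
  obtains i where "sg {i} T = - sg T {i}"
proof (cases "even (card T)")
  case True
  from assms obtain i where "i \<in> T"
    by blast
  with True assms have "odd (card (T - {i}))"
    by (simp add: card_gt_0_iff)
  then show ?thesis
    using that anticommute_basis_singleton by blast
next
  case False
  with even_dim have "T \<noteq> UNIV"
    by auto
  then obtain i where "i \<notin> T"
    by blast
  with False have "odd (card (T - {i}))"
    by simp
  then show ?thesis
    using that anticommute_basis_singleton by blast
qed

lemma trace_unique:
  assumes lin: "cl_linear_form t" and comm: "\<And>a b. t (a \<cdot> b) = t (b \<cdot> a)" and one: "t cl_one = 1"
  shows "t = scalar_part"
proof (rule cl_linear_form_basis_ext[OF lin cl_linear_form_scalar_part])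
  fix T :: "'n set"
  show "t (cl_basis T) = scalar_part (cl_basis T)"
  proof (cases "T = {}")
    case False
    then obtain i where i: "sg {i} T = - sg T {i}"
      by (rule ex_anticommuting_generator)
    let ?E = "cl_basis {i}" and ?c = "sg {i} {i}"
    have t_scale: "t (cl_scale c x) = c * t x" for c x
      using lin by (simp add: cl_linear_form_def)
    have square: "cl_basis T \<cdot> ?E \<cdot> ?E = cl_scale ?c (cl_basis T)"
      unfolding mult_assoc by (simp add: mult_basis mult_scale_right flip: cl_one_eq_basis)
    have "t (?E \<cdot> cl_basis T \<cdot> ?E) = t (cl_basis T \<cdot> ?E \<cdot> ?E)"
      using comm[of ?E "cl_basis T \<cdot> ?E"] by (simp add: mult_assoc)
    also have "\<dots> = ?c * t (cl_basis T)"
      by (simp add: square t_scale)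
    finally have "t (?E \<cdot> cl_basis T \<cdot> ?E) = ?c * t (cl_basis T)" .
    moreover have "?E \<cdot> cl_basis T = cl_scale (-1) (cl_basis T \<cdot> ?E)"
    proof -
      have "sym_diff {i} T = sym_diff T {i}"
        by auto
      then show ?thesis
        using i by (simp add: mult_basis)
    qed
    ultimately have "t (cl_basis T) = 0"
      using cl_sign_nonzero[of "{i}" "{i}"] by (simp add: mult_scale_left square t_scale)
    then show ?thesis
      using False by (simp add: scalar_part_basis)
  qed (use one in \<open>simp add: cl_one_eq_basis scalar_part_basis\<close>)
qed

lemma cl_trace_eq_scalar_part: "cl_trace eps = scalar_part"
  unfolding cl_trace_def
  by (rule the_equality)
     (use cl_linear_form_scalar_part scalar_part_commute scalar_part_one trace_unique in blast)+

end

section \<open>Averaging over the basis: centre and primeness\<close>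

context clifford
begin

definition basis_inverse :: "'n set \<Rightarrow> 'n clf" where
  "basis_inverse S = cl_scale (sg S S) (cl_basis S)"

lemma mult_basis_inverse: "cl_basis S \<cdot> basis_inverse S = cl_one"
  and mult_basis_inverse_left: "basis_inverse S \<cdot> cl_basis S = cl_one"
  by (simp_all add: basis_inverse_def mult_scale_left mult_scale_right mult_basis cl_one_eq_basis
      mult.assoc[symmetric] cl_sign_square)

lemma left_inverse_eq_right_inverse:
  assumes "x \<cdot> y = cl_one" "y' \<cdot> x = cl_one"
  shows "y = y'"
proof -
  have "y = y' \<cdot> x \<cdot> y"
    using assms(2) by simp
  also have "\<dots> = y'"
    using assms(1) by (simp add: mult_assoc)
  finally show ?thesis .
qed

lemma basis_inverse_mult_singleton:
  "basis_inverse S \<cdot> basis_inverse {i} = cl_scale (1 / sg {i} S) (basis_inverse (sym_diff {i} S))"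
proof (rule left_inverse_eq_right_inverse[symmetric])
  show "cl_basis {i} \<cdot> cl_basis S \<cdot> cl_scale (1 / sg {i} S) (basis_inverse (sym_diff {i} S)) = cl_one"
    using cl_sign_nonzero[of "{i}" S]
    by (simp add: mult_basis mult_scale_left mult_scale_right mult_basis_inverse)
  show "basis_inverse S \<cdot> basis_inverse {i} \<cdot> (cl_basis {i} \<cdot> cl_basis S) = cl_one"
    by (simp add: mult_assoc) (simp add: mult_assoc[symmetric] mult_basis_inverse_left)
qed

definition cl_average :: "'n clf \<Rightarrow> 'n clf" where
  "cl_average x = cl_sum (\<lambda>S. cl_basis S \<cdot> x \<cdot> basis_inverse S) UNIV"

lemma conjugate_cl_average: "cl_basis {i} \<cdot> cl_average x \<cdot> basis_inverse {i} = cl_average x"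
proof -
  have "cl_basis {i} \<cdot> (cl_basis S \<cdot> x \<cdot> basis_inverse S) \<cdot> basis_inverse {i}
      = cl_basis (sym_diff {i} S) \<cdot> x \<cdot> basis_inverse (sym_diff {i} S)" for S
  proof -
    have "cl_basis {i} \<cdot> (cl_basis S \<cdot> x \<cdot> basis_inverse S) \<cdot> basis_inverse {i}
        = cl_basis {i} \<cdot> cl_basis S \<cdot> x \<cdot> (basis_inverse S \<cdot> basis_inverse {i})"
      by (simp add: mult_assoc)
    then show ?thesis
      using cl_sign_nonzero[of "{i}" S]
      by (simp add: basis_inverse_mult_singleton mult_basis mult_scale_left mult_scale_right)
  qed
  then have "cl_basis {i} \<cdot> cl_average x \<cdot> basis_inverse {i}
      = cl_sum (\<lambda>S. cl_basis (sym_diff {i} S) \<cdot> x \<cdot> basis_inverse (sym_diff {i} S)) UNIV"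
    unfolding cl_average_def by (simp add: mult_sum_left mult_sum_right)
  also have "\<dots> = cl_average x"
    unfolding cl_average_def cl_sum_def by (rule ext, rule sum_reindex_sym_diff[symmetric])
  finally show ?thesis .
qed

lemma cl_average_commute_generator: "cl_basis {i} \<cdot> cl_average x = cl_average x \<cdot> cl_basis {i}"
proof -
  have "cl_average x \<cdot> cl_basis {i} = cl_basis {i} \<cdot> cl_average x \<cdot> basis_inverse {i} \<cdot> cl_basis {i}"
    by (simp only: conjugate_cl_average)
  also have "\<dots> = cl_basis {i} \<cdot> cl_average x"
    by (simp add: mult_assoc mult_basis_inverse_left)
  finally show ?thesis
    by simp
qed

lemma scalar_part_cl_average:
  "scalar_part (cl_average x) = of_nat (card (UNIV :: 'n set set)) * scalar_part x"
proof -
  have "scalar_part (cl_basis S \<cdot> x \<cdot> basis_inverse S) = scalar_part (basis_inverse S \<cdot> (cl_basis S \<cdot> x))" for S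
    by (rule scalar_part_commute)
  also have "\<dots> S = scalar_part x" for S
    by (simp add: mult_assoc[symmetric] mult_basis_inverse_left)
  finally have "scalar_part (cl_basis S \<cdot> x \<cdot> basis_inverse S) = scalar_part x" for S .
  then show ?thesis
    by (simp add: cl_average_def scalar_part_def cl_sum_apply)
qed

lemma mult_generator_left_apply: "(cl_basis {i} \<cdot> z) U = sg {i} (sym_diff {i} U) * z (sym_diff {i} U)"
  and mult_generator_right_apply: "(z \<cdot> cl_basis {i}) U = sg (sym_diff {i} U) {i} * z (sym_diff {i} U)"
proof -
  have "(cl_basis {i} \<cdot> z) U
      = (\<Sum>S\<in>UNIV. if S = {i} then sg {i} (sym_diff {i} U) * z (sym_diff {i} U) else 0)"
    unfolding cl_mult_apply by (rule sum.cong) (auto simp: cl_basis_apply)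
  then show "(cl_basis {i} \<cdot> z) U = sg {i} (sym_diff {i} U) * z (sym_diff {i} U)"
    by simp
  have "(z \<cdot> cl_basis {i}) U
      = (\<Sum>S\<in>UNIV. if S = sym_diff {i} U then sg (sym_diff {i} U) {i} * z (sym_diff {i} U) else 0)"
    unfolding cl_mult_apply by (rule sum.cong) (auto simp: cl_basis_apply)
  then show "(z \<cdot> cl_basis {i}) U = sg (sym_diff {i} U) {i} * z (sym_diff {i} U)"
    by simp
qed

end

context even_clifford
begin

lemma central_eq_scalar:
  assumes "\<And>i. cl_basis {i} \<cdot> z = z \<cdot> cl_basis {i}"
  shows "z = cl_scale (z {}) cl_one"
proof
  fix T
  show "z T = cl_scale (z {}) cl_one T"
  proof (cases "T = {}")
    case False
    then obtain i where i: "sg {i} T = - sg T {i}"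
      by (rule ex_anticommuting_generator)
    have "(cl_basis {i} \<cdot> z) (sym_diff {i} T) = (z \<cdot> cl_basis {i}) (sym_diff {i} T)"
      using assms by simp
    then have "sg {i} T * z T = sg T {i} * z T"
      by (simp add: mult_generator_left_apply mult_generator_right_apply)
    then have "z T = 0"
      using i cl_sign_nonzero[of T "{i}"] by auto
    then show ?thesis
      using False by (simp add: cl_pointwise cl_one_def)
  qed (simp add: cl_pointwise cl_one_def)
qed

lemma cl_average_eq:
  "cl_average x = cl_scale (of_nat (card (UNIV :: 'n set set)) * scalar_part x) cl_one"
proof -
  have "cl_average x = cl_scale (cl_average x {}) cl_one"
    by (rule central_eq_scalar) (rule cl_average_commute_generator)
  then show ?thesis
    using scalar_part_cl_average[of x] by (simp add: scalar_part_def)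
qed

lemma cl_prime:
  assumes "a \<noteq> cl_zero" "b \<noteq> cl_zero"
  obtains y where "a \<cdot> y \<cdot> b \<noteq> cl_zero"
proof -
  obtain c where c: "scalar_part (b \<cdot> c) \<noteq> 0"
    using scalar_part_nondegenerate assms(2) by blast
  have "a \<cdot> cl_average (b \<cdot> c) = cl_sum (\<lambda>S. a \<cdot> cl_basis S \<cdot> b \<cdot> (c \<cdot> basis_inverse S)) UNIV"
    unfolding cl_average_def by (simp add: mult_sum_right mult_assoc)
  moreover have "a \<cdot> cl_average (b \<cdot> c) \<noteq> cl_zero"
    using assms(1) c by (simp add: cl_average_eq mult_scale_right cl_scale_eq_zero_iff)
  ultimately have "cl_sum (\<lambda>S. a \<cdot> cl_basis S \<cdot> b \<cdot> (c \<cdot> basis_inverse S)) UNIV \<noteq> cl_zero"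
    by simp
  then obtain S where "a \<cdot> cl_basis S \<cdot> b \<cdot> (c \<cdot> basis_inverse S) \<noteq> cl_zero"
    using cl_sum_nonzero by blast
  then have "a \<cdot> cl_basis S \<cdot> b \<noteq> cl_zero"
    by auto
  then show ?thesis
    using that by blast
qed

end

section \<open>Polynomials in an element of a corner \<open>e A e\<close>\<close>

lemma ex_nontrivial_linear_relation:
  fixes v :: "nat \<Rightarrow> complex ^ 'b"
  obtains c where "\<exists>k\<le>CARD('b). c k \<noteq> 0" "(\<Sum>k\<le>CARD('b). c k *s v k) = 0"
proof (cases "inj_on v {..CARD('b)}")
  case False
  then obtain i j where ij: "i \<le> CARD('b)" "j \<le> CARD('b)" "i \<noteq> j" "v i = v j"
    unfolding inj_on_def by auto
  let ?c = "\<lambda>k. if k = j then 1 else if k = i then -1 else (0::complex)"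
  show ?thesis
  proof (rule that[of ?c])
    show "\<exists>k\<le>CARD('b). ?c k \<noteq> 0"
      using ij(2) by auto
    have "(\<Sum>k\<le>CARD('b). ?c k *s v k)
        = (\<Sum>k\<le>CARD('b). (if k = j then v j else 0) - (if k = i then v i else 0))"
      by (rule sum.cong) (use ij in auto)
    also have "\<dots> = 0"
      using ij by (simp add: sum_subtractf)
    finally show "(\<Sum>k\<le>CARD('b). ?c k *s v k) = 0" .
  qed
next
  case True
  let ?V = "v ` {..CARD('b)}"
  have "vec.dependent ?V"
  proof (rule ccontr)
    assume "\<not> vec.dependent ?V"
    then have "card ?V \<le> vec.dim ?V"
      using vec.independent_bound_general by blast
    also have "\<dots> \<le> vec.dim (UNIV :: (complex ^ 'b) set)"
      by (rule vec.dim_subset) simp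
    finally show False
      using True by (simp add: card_image card_cart_basis)
  qed
  then obtain w where w: "\<exists>t\<in>?V. w t \<noteq> 0" "(\<Sum>t\<in>?V. w t *s t) = 0"
    using vec.dependent_finite[of ?V] by auto
  show ?thesis
  proof (rule that[of "\<lambda>k. w (v k)"])
    show "\<exists>k\<le>CARD('b). w (v k) \<noteq> 0"
      using w(1) by auto
    show "(\<Sum>k\<le>CARD('b). w (v k) *s v k) = 0"
      using w(2) True by (simp add: sum.reindex)
  qed
qed

context clifford
begin

definition in_corner :: "'n clf \<Rightarrow> 'n clf \<Rightarrow> bool" where
  "in_corner e x \<longleftrightarrow> e \<cdot> x = x \<and> x \<cdot> e = x"

text \<open>Powers and polynomials are formed in the corner algebra, whose unit is \<open>e\<close>.\<close>

primrec corner_power :: "'n clf \<Rightarrow> 'n clf \<Rightarrow> nat \<Rightarrow> 'n clf" where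
  "corner_power e x 0 = e"
| "corner_power e x (Suc k) = x \<cdot> corner_power e x k"

definition corner_poly :: "'n clf \<Rightarrow> 'n clf \<Rightarrow> complex poly \<Rightarrow> 'n clf" where
  "corner_poly e x P = cl_sum (\<lambda>i. cl_scale (coeff P i) (corner_power e x i)) {..degree P}"

lemma in_corner_add: "in_corner e a \<Longrightarrow> in_corner e b \<Longrightarrow> in_corner e (cl_add a b)"
  by (simp add: in_corner_def mult_add_left mult_add_right)

lemma in_corner_scale: "in_corner e a \<Longrightarrow> in_corner e (cl_scale c a)"
  by (simp add: in_corner_def mult_scale_left mult_scale_right)

lemma in_corner_mult: "in_corner e a \<Longrightarrow> in_corner e b \<Longrightarrow> in_corner e (a \<cdot> b)"
  unfolding in_corner_def by (simp add: mult_assoc[symmetric]) (simp add: mult_assoc)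

lemma in_corner_unit: "e \<cdot> e = e \<Longrightarrow> in_corner e e"
  by (simp add: in_corner_def)

lemma in_corner_sandwich: "e \<cdot> e = e \<Longrightarrow> in_corner e (e \<cdot> a \<cdot> e)"
  by (simp add: in_corner_def mult_assoc) (simp add: mult_assoc[symmetric])

lemma corner_poly_eq_sum:
  assumes "degree P < N"
  shows "corner_poly e x P = cl_sum (\<lambda>i. cl_scale (coeff P i) (corner_power e x i)) {..<N}"
proof -
  have "(\<Sum>i<N. coeff P i * corner_power e x i U) = (\<Sum>i\<le>degree P. coeff P i * corner_power e x i U)" for U
    by (rule sum.mono_neutral_right) (use assms in \<open>auto simp: coeff_eq_0\<close>)
  then show ?thesis
    by (simp add: corner_poly_def fun_eq_iff cl_pointwise)
qed

lemma corner_poly_zero [simp]: "corner_poly e x 0 = cl_zero"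
  by (simp add: corner_poly_def fun_eq_iff cl_pointwise)

lemma corner_poly_add: "corner_poly e x (P + Q) = cl_add (corner_poly e x P) (corner_poly e x Q)"
proof -
  let ?N = "Suc (max (degree P) (degree Q))"
  have "degree (P + Q) < ?N" "degree P < ?N" "degree Q < ?N"
    using degree_add_le_max[of P Q] by auto
  then show ?thesis
    by (simp only: corner_poly_eq_sum)
       (simp add: fun_eq_iff cl_pointwise sum.distrib algebra_simps del: sum.lessThan_Suc)
qed

lemma corner_poly_smult: "corner_poly e x (smult c P) = cl_scale c (corner_poly e x P)"
proof -
  have "degree (smult c P) < Suc (degree P)" "degree P < Suc (degree P)"
    by (simp_all add: le_imp_less_Suc)
  then show ?thesis
    by (simp only: corner_poly_eq_sum)
       (simp add: fun_eq_iff cl_pointwise sum_distrib_left algebra_simps del: sum.lessThan_Suc)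
qed

lemma corner_poly_diff:
  "corner_poly e x (P - Q) = cl_add (corner_poly e x P) (cl_scale (-1) (corner_poly e x Q))"
proof -
  have "P - Q = P + smult (-1) Q"
    by simp
  then show ?thesis
    by (simp only: corner_poly_add corner_poly_smult)
qed

text \<open>The powers of \<open>x\<close> live in \<open>\<complex>\<^bsup>2\<^sup>n\<^esup>\<close>, so the first \<open>2\<^sup>n + 1\<close> of them are dependent.\<close>

lemma corner_poly_annihilator: obtains P where "P \<noteq> 0" "corner_poly e x P = cl_zero"
proof -
  let ?N = "CARD('n set)"
  obtain c where c: "\<exists>k\<le>?N. c k \<noteq> 0"
    and rel: "(\<Sum>k\<le>?N. c k *s vec_lambda (corner_power e x k)) = 0"
    by (rule ex_nontrivial_linear_relation)
  define P where "P = Poly (map c [0..<Suc ?N])"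
  have coeff_P: "coeff P k = (if k \<le> ?N then c k else 0)" for k
    by (simp add: P_def nth_default_def del: upt_Suc)
  have "P \<noteq> 0"
    using c coeff_P by (metis coeff_0)
  moreover have "corner_poly e x P = cl_zero"
  proof
    fix U
    have "degree P < Suc ?N"
      using degree_le[of ?N P] coeff_P by simp
    then have "corner_poly e x P U = (\<Sum>k<Suc ?N. c k * corner_power e x k U)"
      by (simp add: corner_poly_eq_sum cl_pointwise coeff_P)
    also have "\<dots> = (\<Sum>k\<le>?N. c k *s vec_lambda (corner_power e x k)) $ U"
      by (simp add: sum_component lessThan_Suc_atMost)
    also have "\<dots> = 0"
      by (simp only: rel zero_index)
    finally show "corner_poly e x P U = cl_zero U"
      by (simp add: cl_pointwise)
  qed
  ultimately show ?thesis
    using that by blast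
qed

context
  fixes e x :: "'n clf"
  assumes idem: "e \<cdot> e = e" and x: "in_corner e x"
begin

lemma corner_power_unit_left: "e \<cdot> corner_power e x k = corner_power e x k"
  using idem x by (induction k) (simp_all add: in_corner_def mult_assoc[symmetric])

lemma corner_power_unit_right: "corner_power e x k \<cdot> e = corner_power e x k"
  using idem x by (induction k) (simp_all add: in_corner_def mult_assoc)

lemma corner_power_Suc_right: "corner_power e x (Suc k) = corner_power e x k \<cdot> x"
proof (induction k)
  case 0
  then show ?case
    using x by (simp add: in_corner_def)
next
  case (Suc k)
  then have "corner_power e x (Suc (Suc k)) = x \<cdot> (corner_power e x k \<cdot> x)"
    by simp
  then show ?case
    by (simp add: mult_assoc)
qed

lemma corner_poly_pCons: "corner_poly e x (pCons a P) = cl_add (cl_scale a e) (x \<cdot> corner_poly e x P)"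
proof -
  have "degree (pCons a P) < Suc (Suc (degree P))"
    by (simp add: degree_pCons_le le_imp_less_Suc)
  then have "corner_poly e x (pCons a P)
      = cl_sum (\<lambda>i. cl_scale (coeff (pCons a P) i) (corner_power e x i)) {..<Suc (Suc (degree P))}"
    by (rule corner_poly_eq_sum)
  also have "\<dots> = cl_add (cl_scale a e)
      (cl_sum (\<lambda>i. cl_scale (coeff P i) (corner_power e x (Suc i))) {..<Suc (degree P)})"
    by (simp only: cl_sum_lessThan_Suc_shift coeff_pCons_0 coeff_pCons_Suc corner_power.simps(1))
  also have "cl_sum (\<lambda>i. cl_scale (coeff P i) (corner_power e x (Suc i))) {..<Suc (degree P)}
      = x \<cdot> corner_poly e x P"
    by (simp add: corner_poly_def mult_sum_right mult_scale_right lessThan_Suc_atMost)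
  finally show ?thesis .
qed

lemma corner_poly_unit_left: "e \<cdot> corner_poly e x P = corner_poly e x P"
  by (simp add: corner_poly_def mult_sum_right mult_scale_right corner_power_unit_left)

lemma corner_poly_unit_right: "corner_poly e x P \<cdot> e = corner_poly e x P"
  by (simp add: corner_poly_def mult_sum_left mult_scale_left corner_power_unit_right)

lemma in_corner_corner_poly: "in_corner e (corner_poly e x P)"
  by (simp add: in_corner_def corner_poly_unit_left corner_poly_unit_right)

lemma corner_poly_mult: "corner_poly e x (P * Q) = corner_poly e x P \<cdot> corner_poly e x Q"
proof (induction P rule: pCons_induct)
  case (pCons a P)
  have "corner_poly e x (pCons a P * Q) = corner_poly e x (smult a Q + pCons 0 (P * Q))"
    by simp
  also have "\<dots> = cl_add (cl_scale a (corner_poly e x Q)) (x \<cdot> (corner_poly e x P \<cdot> corner_poly e x Q))"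
    by (simp add: pCons.IH corner_poly_add corner_poly_smult corner_poly_pCons)
  also have "\<dots> = corner_poly e x (pCons a P) \<cdot> corner_poly e x Q"
    by (simp add: corner_poly_pCons mult_add_left mult_scale_left corner_poly_unit_left mult_assoc)
  finally show ?case .
qed simp

lemma corner_poly_const: "corner_poly e x [:c:] = cl_scale c e"
  using corner_poly_pCons[of c 0] by simp

lemma corner_poly_one: "corner_poly e x 1 = e"
  using corner_poly_const[of 1] by (simp add: one_pCons)

lemma corner_poly_linear: "corner_poly e x [:a, b:] = cl_add (cl_scale a e) (cl_scale b x)"
  using corner_poly_pCons[of a "[:b:]"] x by (simp add: corner_poly_const mult_scale_right in_corner_def)

lemma corner_poly_power: "corner_poly e x (P ^ k) = corner_power e (corner_poly e x P) k"
  by (induction k) (simp_all add: corner_poly_one corner_poly_mult)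

end

end

section \<open>The corner of a primitive idempotent is one-dimensional\<close>

lemma primitive_idempotentD:
  assumes "primitive_idempotent eps e"
  shows "cl_mult eps e e = e" "e \<noteq> cl_zero"
  using assms by (simp_all add: primitive_idempotent_def cl_idempotent_def)

context clifford
begin

definition corner_nilpotent :: "'n clf \<Rightarrow> 'n clf \<Rightarrow> bool" where
  "corner_nilpotent e y \<longleftrightarrow> in_corner e y \<and> (\<exists>k. corner_power e y k = cl_zero)"

lemma corner_power_scale: "corner_power e (cl_scale c m) k = cl_scale (c ^ k) (corner_power e m k)"
  by (induction k) (simp_all add: mult_scale_left mult_scale_right mult.commute)

lemma corner_nilpotent_scale:
  assumes "corner_nilpotent e n"
  shows "corner_nilpotent e (cl_scale c n)"
proof -
  obtain k where "in_corner e n" "corner_power e n k = cl_zero"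
    using assms by (auto simp: corner_nilpotent_def)
  then have "in_corner e (cl_scale c n)" "corner_power e (cl_scale c n) k = cl_zero"
    by (simp_all add: in_corner_scale corner_power_scale)
  then show ?thesis
    by (auto simp: corner_nilpotent_def)
qed

lemma corner_nilpotent_zero: "corner_nilpotent e cl_zero"
  unfolding corner_nilpotent_def in_corner_def by (auto intro: exI[of _ 1])

lemma corner_poly_minimal_annihilator:
  obtains P where "P \<noteq> 0" "corner_poly e x P = cl_zero"
    "\<And>Q. Q \<noteq> 0 \<Longrightarrow> corner_poly e x Q = cl_zero \<Longrightarrow> degree P \<le> degree Q"
proof -
  obtain P0 where "P0 \<noteq> 0 \<and> corner_poly e x P0 = cl_zero"
    using corner_poly_annihilator by blast
  then show ?thesis
    using ex_has_least_nat[of "\<lambda>P. P \<noteq> 0 \<and> corner_poly e x P = cl_zero" P0 degree] that by blast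
qed

lemma corner_power_mult_inverse:
  assumes idem: "e \<cdot> e = e" and y: "in_corner e y" and r: "in_corner e r" and yr: "y \<cdot> r = e"
  shows "corner_power e y k \<cdot> corner_power e r k = e"
proof (induction k)
  case (Suc k)
  have "corner_power e y (Suc k) \<cdot> corner_power e r (Suc k)
      = corner_power e y k \<cdot> y \<cdot> (r \<cdot> corner_power e r k)"
    by (subst corner_power_Suc_right[OF idem y]) simp
  also have "\<dots> = corner_power e y k \<cdot> (y \<cdot> r) \<cdot> corner_power e r k"
    by (simp add: mult_assoc)
  also have "\<dots> = e"
    using Suc yr by (simp add: corner_power_unit_right[OF idem y])
  finally show ?case .
qed (simp add: idem)

lemma corner_nilpotent_not_right_invertible:
  assumes idem: "e \<cdot> e = e" and "e \<noteq> cl_zero" "corner_nilpotent e y" and r: "in_corner e r"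
  shows "y \<cdot> r \<noteq> e"
proof
  assume "y \<cdot> r = e"
  obtain k where y: "in_corner e y" and "corner_power e y k = cl_zero"
    using assms by (auto simp: corner_nilpotent_def)
  then have "e = cl_zero"
    using corner_power_mult_inverse[OF idem y r \<open>y \<cdot> r = e\<close>, of k] by simp
  with \<open>e \<noteq> cl_zero\<close> show False ..
qed

lemma corner_nilpotent_not_left_invertible:
  assumes idem: "e \<cdot> e = e" and "e \<noteq> cl_zero" "corner_nilpotent e y" and r: "in_corner e r"
  shows "r \<cdot> y \<noteq> e"
proof
  assume "r \<cdot> y = e"
  obtain k where y: "in_corner e y" and "corner_power e y k = cl_zero"
    using assms by (auto simp: corner_nilpotent_def)
  then have "e = cl_zero"
    using corner_power_mult_inverse[OF idem r y \<open>r \<cdot> y = e\<close>, of k] by simp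
  with \<open>e \<noteq> cl_zero\<close> show False ..
qed

text \<open>The inverse of \<open>\<mu> e + m\<close> is the geometric series \<open>\<mu>\<^sup>-\<^sup>1 \<Sum>\<^sub>j (- m / \<mu>)\<^sup>j\<close>.\<close>

lemma corner_scalar_plus_nilpotent_invertible:
  assumes idem: "e \<cdot> e = e" and m: "corner_nilpotent e m" and mu: "\<mu> \<noteq> 0"
  obtains r where "in_corner e r" "cl_add (cl_scale \<mu> e) m \<cdot> r = e" "r \<cdot> cl_add (cl_scale \<mu> e) m = e"
proof -
  obtain k where mB: "in_corner e m" and k: "corner_power e m k = cl_zero"
    using m by (auto simp: corner_nilpotent_def)
  let ?ev = "corner_poly e m"
  define q where "q = [:0, - 1 / \<mu>:]"
  define W where "W = smult (1 / \<mu>) (\<Sum>j<k. q ^ j)"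
  have "[:\<mu>, 1:] = smult \<mu> (1 - q)"
    using mu by (simp add: q_def one_pCons)
  then have "[:\<mu>, 1:] * W = (1 - q) * (\<Sum>j<k. q ^ j)"
    using mu by (simp add: W_def)
  also have "\<dots> = 1 - q ^ k"
    by (rule one_diff_power_eq[symmetric])
  finally have "?ev ([:\<mu>, 1:] * W) = cl_add e (cl_scale (-1) (?ev (q ^ k)))"
    by (simp add: corner_poly_diff corner_poly_one[OF idem mB])
  also have "?ev (q ^ k) = cl_zero"
    by (simp add: q_def corner_poly_power[OF idem mB] corner_poly_linear[OF idem mB] corner_power_scale k)
  finally have inverse: "?ev [:\<mu>, 1:] \<cdot> ?ev W = e"
    by (simp only: corner_poly_mult[OF idem mB] cl_scale_zero cl_add_zero)
  have lin: "?ev [:\<mu>, 1:] = cl_add (cl_scale \<mu> e) m"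
    by (simp add: corner_poly_linear[OF idem mB])
  show ?thesis
  proof (rule that)
    show "in_corner e (?ev W)"
      by (rule in_corner_corner_poly[OF idem mB])
    show "cl_add (cl_scale \<mu> e) m \<cdot> ?ev W = e"
      using inverse lin by simp
    have "?ev W \<cdot> ?ev [:\<mu>, 1:] = ?ev [:\<mu>, 1:] \<cdot> ?ev W"
      by (simp only: corner_poly_mult[OF idem mB, symmetric] mult.commute)
    then show "?ev W \<cdot> cl_add (cl_scale \<mu> e) m = e"
      using inverse lin by simp
  qed
qed

context
  fixes e :: "'n clf"
  assumes prim: "primitive_idempotent eps e"
begin

private lemma idem: "e \<cdot> e = e"
  and nonzero: "e \<noteq> cl_zero"
  using primitive_idempotentD[OF prim] by simp_all

lemma idempotent_in_corner_cases:
  assumes g: "g \<cdot> g = g" and corner: "in_corner e g"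
  shows "g = cl_zero \<or> g = e"
proof (rule ccontr)
  assume c: "\<not> (g = cl_zero \<or> g = e)"
  define h where "h = cl_add e (cl_scale (-1) g)"
  have ge: "g \<cdot> e = g" "e \<cdot> g = g"
    using corner by (auto simp: in_corner_def)
  have "g \<cdot> h = cl_zero" "h \<cdot> g = cl_zero" "h \<cdot> h = h"
    unfolding h_def using ge g idem
    by (simp_all add: mult_add_left mult_add_right mult_scale_left mult_scale_right fun_eq_iff cl_pointwise)
  moreover have "e = cl_add g h"
    by (simp add: h_def fun_eq_iff cl_pointwise)
  moreover from this c have "h \<noteq> cl_zero"
    by auto
  ultimately show False
    using prim g c unfolding primitive_idempotent_def cl_idempotent_def by blast
qed

lemma corner_poly_coprime_factor_vanishes:
  assumes x: "in_corner e x" and ann: "corner_poly e x (R * Q) = cl_zero" and cop: "coprime R Q"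
  shows "corner_poly e x R = cl_zero \<or> corner_poly e x Q = cl_zero"
proof -
  let ?ev = "corner_poly e x"
  define A B where "A = fst (bezout_coefficients R Q)" and "B = snd (bezout_coefficients R Q)"
  have AB: "A * R + B * Q = 1"
    using bezout_coefficients_fst_snd[of R Q] coprime_imp_gcd_eq_1[OF cop] by (simp add: A_def B_def)
  have kills: "?ev (S * (R * Q)) = cl_zero" for S
    by (simp only: corner_poly_mult[OF idem x, of S "R * Q"] ann mult_zero_right)
  define g where "g = ?ev (B * Q)"
  have "(B * Q) * (B * Q) - (B * Q - (A * B) * (R * Q)) = (B * Q) * (A * R + B * Q - 1)"
    by (simp add: algebra_simps)
  then have "(B * Q) * (B * Q) = B * Q - (A * B) * (R * Q)"
    using AB by simp
  then have "g \<cdot> g = g"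
    unfolding g_def corner_poly_mult[OF idem x, symmetric] by (simp add: corner_poly_diff kills)
  then have "g = cl_zero \<or> g = e"
    using idempotent_in_corner_cases in_corner_corner_poly[OF idem x] g_def by blast
  then show ?thesis
  proof
    assume "g = cl_zero"
    have "A * R = 1 - B * Q"
      using AB by (simp add: eq_diff_eq)
    then have "?ev (A * R) = e"
      using \<open>g = cl_zero\<close> by (simp add: g_def corner_poly_diff corner_poly_one[OF idem x])
    then have "?ev Q = ?ev (A * R) \<cdot> ?ev Q"
      by (simp add: corner_poly_unit_left[OF idem x])
    also have "\<dots> = cl_zero"
      using kills[of A] by (simp add: corner_poly_mult[OF idem x, symmetric] mult.assoc)
    finally show ?thesis
      by simp
  next
    assume "g = e"
    then have "?ev R = ?ev R \<cdot> g"
      by (simp add: corner_poly_unit_right[OF idem x])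
    also have "\<dots> = cl_zero"
      using kills[of B] by (simp add: g_def corner_poly_mult[OF idem x, symmetric] mult_ac)
    finally show ?thesis
      by simp
  qed
qed

text \<open>An element of the corner minus a root of its minimal polynomial is nilpotent: any other
  coprime factor of the minimal polynomial would split \<open>e\<close> into orthogonal idempotents.\<close>

lemma corner_scalar_plus_nilpotent:
  assumes x: "in_corner e x"
  obtains z m where "corner_nilpotent e m" "x = cl_add (cl_scale z e) m"
proof -
  let ?ev = "corner_poly e x"
  obtain P where P: "P \<noteq> 0" "?ev P = cl_zero"
    and minimal: "\<And>Q. Q \<noteq> 0 \<Longrightarrow> ?ev Q = cl_zero \<Longrightarrow> degree P \<le> degree Q"
    using corner_poly_minimal_annihilator[of e x] by blast
  have "degree P \<noteq> 0"
  proof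
    assume "degree P = 0"
    then obtain c where "P = [:c:]"
      by (rule degree_eq_zeroE)
    then show False
      using P nonzero by (simp add: corner_poly_const[OF idem x] cl_scale_eq_zero_iff)
  qed
  then have "\<not> constant (poly P)"
    by (simp add: constant_degree)
  then obtain z where "poly P z = 0"
    using fundamental_theorem_of_algebra by blast
  define L where "L = [:- z, 1:]"
  define k where "k = order z P"
  have "k \<noteq> 0"
    using \<open>poly P z = 0\<close> P(1) order_root unfolding k_def by blast
  obtain Q where PQ: "P = L ^ k * Q" and "\<not> L dvd Q"
    using order_decomp[OF P(1), of z] unfolding L_def k_def by blast
  have "prime_elem L"
    unfolding L_def by (rule prime_elem_linear_field_poly) simp
  with \<open>\<not> L dvd Q\<close> have "coprime (L ^ k) Q"
    by (simp add: prime_elem_imp_coprime)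
  then have "?ev (L ^ k) = cl_zero \<or> ?ev Q = cl_zero"
    using corner_poly_coprime_factor_vanishes[OF x] P(2) PQ by simp
  moreover have "\<not> ?ev Q = cl_zero"
  proof
    assume "?ev Q = cl_zero"
    moreover have "Q \<noteq> 0" "degree P = k + degree Q"
      using PQ P(1) by (auto simp: degree_mult_eq L_def degree_linear_power)
    ultimately show False
      using minimal \<open>k \<noteq> 0\<close> by fastforce
  qed
  ultimately have "corner_power e (cl_add (cl_scale (-z) e) x) k = cl_zero"
    by (simp add: corner_poly_power[OF idem x] corner_poly_linear[OF idem x] L_def)
  moreover have "in_corner e (cl_add (cl_scale (-z) e) x)"
    using x in_corner_unit[OF idem] by (simp add: in_corner_add in_corner_scale)
  ultimately have "corner_nilpotent e (cl_add (cl_scale (-z) e) x)"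
    unfolding corner_nilpotent_def by blast
  moreover have "x = cl_add (cl_scale z e) (cl_add (cl_scale (-z) e) x)"
    by (simp add: fun_eq_iff cl_pointwise)
  ultimately show ?thesis
    using that by blast
qed

lemma corner_nilpotent_mult_right:
  assumes n: "corner_nilpotent e n" and b: "in_corner e b"
  shows "corner_nilpotent e (n \<cdot> b)"
proof -
  have "in_corner e n"
    using n by (simp add: corner_nilpotent_def)
  then obtain z m where m: "corner_nilpotent e m" and w: "n \<cdot> b = cl_add (cl_scale z e) m"
    using corner_scalar_plus_nilpotent[OF in_corner_mult] b by blast
  show ?thesis
  proof (cases "z = 0")
    case False
    then obtain r where r: "in_corner e r" "cl_add (cl_scale z e) m \<cdot> r = e"
      using corner_scalar_plus_nilpotent_invertible[OF idem m] by blast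
    then have "n \<cdot> (b \<cdot> r) = e"
      using w by (simp add: mult_assoc[symmetric])
    then show ?thesis
      using corner_nilpotent_not_right_invertible[OF idem nonzero n] in_corner_mult[OF b r(1)] by blast
  qed (use w m in simp)
qed

lemma corner_nilpotent_mult_left:
  assumes n: "corner_nilpotent e n" and b: "in_corner e b"
  shows "corner_nilpotent e (b \<cdot> n)"
proof -
  have "in_corner e n"
    using n by (simp add: corner_nilpotent_def)
  then obtain z m where m: "corner_nilpotent e m" and w: "b \<cdot> n = cl_add (cl_scale z e) m"
    using corner_scalar_plus_nilpotent[OF in_corner_mult] b by blast
  show ?thesis
  proof (cases "z = 0")
    case False
    then obtain r where r: "in_corner e r" "r \<cdot> cl_add (cl_scale z e) m = e"
      using corner_scalar_plus_nilpotent_invertible[OF idem m] by blast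
    then have "r \<cdot> b \<cdot> n = e"
      using w by (simp add: mult_assoc)
    then show ?thesis
      using corner_nilpotent_not_left_invertible[OF idem nonzero n] in_corner_mult[OF r(1) b] by blast
  qed (use w m in simp)
qed

lemma corner_nilpotent_add:
  assumes n1: "corner_nilpotent e n1" and n2: "corner_nilpotent e n2"
  shows "corner_nilpotent e (cl_add n1 n2)"
proof -
  have "in_corner e n1" "in_corner e n2"
    using n1 n2 by (simp_all add: corner_nilpotent_def)
  then obtain z m where m: "corner_nilpotent e m" and w: "cl_add n1 n2 = cl_add (cl_scale z e) m"
    using corner_scalar_plus_nilpotent[OF in_corner_add] by blast
  show ?thesis
  proof (cases "z = 0")
    case False
    then obtain r where r: "in_corner e r" "cl_add (cl_scale z e) m \<cdot> r = e"
      using corner_scalar_plus_nilpotent_invertible[OF idem m] by blast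
    have "corner_nilpotent e (cl_scale (-1) (n1 \<cdot> r))"
      using corner_nilpotent_scale corner_nilpotent_mult_right[OF n1 r(1)] by blast
    then obtain r' where r': "in_corner e r'"
      "cl_add (cl_scale 1 e) (cl_scale (-1) (n1 \<cdot> r)) \<cdot> r' = e"
      using corner_scalar_plus_nilpotent_invertible[OF idem _ one_neq_zero] by blast
    have "cl_add (n1 \<cdot> r) (n2 \<cdot> r) = e"
      using r w by (simp add: mult_add_left[symmetric])
    moreover have "n2 \<cdot> r = cl_add (cl_add (n1 \<cdot> r) (n2 \<cdot> r)) (cl_scale (-1) (n1 \<cdot> r))"
      by (simp add: fun_eq_iff cl_pointwise)
    ultimately have "n2 \<cdot> r = cl_add (cl_scale 1 e) (cl_scale (-1) (n1 \<cdot> r))"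
      by simp
    then have "n2 \<cdot> (r \<cdot> r') = e"
      using r'(2) by (simp add: mult_assoc[symmetric])
    then show ?thesis
      using corner_nilpotent_not_right_invertible[OF idem nonzero n2] in_corner_mult[OF r(1) r'(1)]
      by blast
  qed (use w m in simp)
qed

lemma corner_nilpotent_sum:
  "finite I \<Longrightarrow> (\<And>i. i \<in> I \<Longrightarrow> corner_nilpotent e (F i)) \<Longrightarrow> corner_nilpotent e (cl_sum F I)"
  by (induction I rule: finite_induct) (simp_all add: corner_nilpotent_zero cl_sum_insert corner_nilpotent_add)

lemma not_corner_nilpotent_unit: "\<not> corner_nilpotent e e"
proof -
  have "corner_power e e k = e" for k
    by (induction k) (simp_all add: idem)
  then show ?thesis
    using nonzero by (simp add: corner_nilpotent_def)
qed

end

end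

text \<open>Nilpotents of the corner have trace zero, since averaging one over the basis stays inside
  the ideal of corner nilpotents; nondegeneracy of the trace then kills them.\<close>

context even_clifford
begin

lemma scalar_part_corner_nilpotent:
  assumes prim: "primitive_idempotent eps e" and n: "corner_nilpotent e n"
  shows "scalar_part n = 0"
proof (rule ccontr)
  assume t: "scalar_part n \<noteq> 0"
  have idem: "e \<cdot> e = e"
    using primitive_idempotentD[OF prim] by simp
  have "in_corner e n"
    using n by (simp add: corner_nilpotent_def)
  let ?D = "of_nat (card (UNIV :: 'n set set)) :: complex"
  have "e \<cdot> cl_average n \<cdot> e = cl_scale (?D * scalar_part n) e"
    by (simp add: cl_average_eq mult_scale_left mult_scale_right idem)
  moreover have "e \<cdot> cl_average n \<cdot> e
      = cl_sum (\<lambda>S. e \<cdot> cl_basis S \<cdot> e \<cdot> n \<cdot> (e \<cdot> basis_inverse S \<cdot> e)) UNIV"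
  proof -
    have "e \<cdot> (cl_basis S \<cdot> n \<cdot> basis_inverse S) \<cdot> e = e \<cdot> cl_basis S \<cdot> e \<cdot> n \<cdot> (e \<cdot> basis_inverse S \<cdot> e)" for S
    proof -
      have "e \<cdot> (cl_basis S \<cdot> n \<cdot> basis_inverse S) \<cdot> e = e \<cdot> (cl_basis S \<cdot> (e \<cdot> n \<cdot> e) \<cdot> basis_inverse S) \<cdot> e"
        using \<open>in_corner e n\<close> by (simp add: in_corner_def)
      then show ?thesis
        by (simp add: mult_assoc)
    qed
    then show ?thesis
      unfolding cl_average_def by (simp add: mult_sum_left mult_sum_right)
  qed
  moreover have "corner_nilpotent e (cl_sum (\<lambda>S. e \<cdot> cl_basis S \<cdot> e \<cdot> n \<cdot> (e \<cdot> basis_inverse S \<cdot> e)) UNIV)"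
    by (intro corner_nilpotent_sum corner_nilpotent_mult_right corner_nilpotent_mult_left
        in_corner_sandwich prim n idem finite)
  ultimately have "corner_nilpotent e (cl_scale (?D * scalar_part n) e)"
    by simp
  then have "corner_nilpotent e (cl_scale (1 / (?D * scalar_part n)) (cl_scale (?D * scalar_part n) e))"
    by (rule corner_nilpotent_scale)
  then show False
    using t not_corner_nilpotent_unit[OF prim] by simp
qed

lemma corner_nilpotent_eq_zero:
  assumes prim: "primitive_idempotent eps e" and n: "corner_nilpotent e n"
  shows "n = cl_zero"
proof (rule scalar_part_nondegenerate)
  fix a
  have idem: "e \<cdot> e = e"
    using primitive_idempotentD[OF prim] by simp
  have ne: "e \<cdot> n = n" "n \<cdot> e = n"
    using n by (auto simp: corner_nilpotent_def in_corner_def)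
  have "scalar_part (n \<cdot> a) = scalar_part (e \<cdot> (n \<cdot> a))"
    using ne by (simp add: mult_assoc[symmetric])
  also have "\<dots> = scalar_part (n \<cdot> a \<cdot> e)"
    by (rule scalar_part_commute)
  also have "\<dots> = scalar_part (n \<cdot> e \<cdot> a \<cdot> e)"
    using ne by simp
  also have "\<dots> = scalar_part (n \<cdot> (e \<cdot> a \<cdot> e))"
    by (simp add: mult_assoc)
  also have "\<dots> = 0"
    using corner_nilpotent_mult_right[OF prim n in_corner_sandwich[OF idem]]
    by (rule scalar_part_corner_nilpotent[OF prim])
  finally show "scalar_part (n \<cdot> a) = 0" .
qed

theorem primitive_corner_eq_scalar:
  assumes prim: "primitive_idempotent eps e" and x: "in_corner e x"
  obtains z where "x = cl_scale z e"
proof -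
  obtain z m where "corner_nilpotent e m" "x = cl_add (cl_scale z e) m"
    by (rule corner_scalar_plus_nilpotent[OF prim x])
  then have "x = cl_scale z e"
    using corner_nilpotent_eq_zero[OF prim, of m] by simp
  then show ?thesis
    by (rule that)
qed

end

section \<open>The \<open>\<sigma>\<close>-product on a spinor module\<close>

context clifford
begin

lemma primitive_if_corner_scalar:
  assumes idem: "f \<cdot> f = f" and nonzero: "f \<noteq> cl_zero"
    and scalar: "\<And>w. \<exists>\<nu>. f \<cdot> w \<cdot> f = cl_scale \<nu> f"
  shows "primitive_idempotent eps f"
  unfolding primitive_idempotent_def cl_idempotent_def
proof (intro conjI idem nonzero notI)
  assume "\<exists>g h. g \<cdot> g = g \<and> h \<cdot> h = h \<and> g \<noteq> cl_zero \<and> h \<noteq> cl_zero \<and>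
      g \<cdot> h = cl_zero \<and> h \<cdot> g = cl_zero \<and> f = cl_add g h"
  then obtain g h where g: "g \<cdot> g = g" and "h \<noteq> cl_zero" "g \<noteq> cl_zero"
    and gh: "g \<cdot> h = cl_zero" "h \<cdot> g = cl_zero" and f: "f = cl_add g h"
    by blast
  have "f \<cdot> g \<cdot> f = g"
    unfolding f by (simp add: mult_add_left mult_add_right g gh)
  moreover obtain \<nu> where "f \<cdot> g \<cdot> f = cl_scale \<nu> f"
    using scalar by blast
  ultimately have g_eq: "g = cl_scale \<nu> f"
    by simp
  then have "cl_scale (\<nu> * \<nu>) f = cl_scale \<nu> f"
    using g idem by (simp add: mult_scale_left mult_scale_right)
  then have "\<nu> = 0 \<or> \<nu> = 1"
    using nonzero by (auto simp: fun_eq_iff cl_pointwise)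
  then show False
  proof
    assume "\<nu> = 1"
    then have "h = cl_zero"
      using f g_eq by (simp add: fun_eq_iff cl_pointwise)
    with \<open>h \<noteq> cl_zero\<close> show False ..
  qed (use g_eq \<open>g \<noteq> cl_zero\<close> in simp)
qed

lemma right_absorb:
  assumes "z \<cdot> e = z" "e \<cdot> f = e"
  shows "z \<cdot> f = z"
proof -
  have "z \<cdot> f = z \<cdot> e \<cdot> f"
    using assms(1) by simp
  also have "\<dots> = z \<cdot> (e \<cdot> f)"
    by (rule mult_assoc)
  finally show ?thesis
    using assms by simp
qed

lemma mem_spinor_module_iff:
  assumes "e \<cdot> e = e"
  shows "\<psi> \<in> spinor_module eps e \<longleftrightarrow> \<psi> \<cdot> e = \<psi>"
proof
  assume "\<psi> \<in> spinor_module eps e"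
  then obtain a where "\<psi> = a \<cdot> e"
    by (auto simp: spinor_module_def)
  then show "\<psi> \<cdot> e = \<psi>"
    using assms by (simp add: mult_assoc)
next
  assume "\<psi> \<cdot> e = \<psi>"
  then show "\<psi> \<in> spinor_module eps e"
    using rangeI[of "\<lambda>a. a \<cdot> e" \<psi>] by (simp add: spinor_module_def)
qed

lemma spinor_module_eq_if_equivalent:
  assumes e: "e \<cdot> e = e" and ef: "e \<cdot> f = e" and fe: "f \<cdot> e = f"
  shows "f \<cdot> f = f" and "spinor_module eps e = spinor_module eps f"
proof -
  show ff: "f \<cdot> f = f"
    using fe ef by (rule right_absorb)
  show "spinor_module eps e = spinor_module eps f"
    using right_absorb[OF _ ef] right_absorb[OF _ fe]
    by (auto simp: mem_spinor_module_iff[OF e] mem_spinor_module_iff[OF ff])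
qed

end

locale real_clifford = even_clifford eps for eps :: "'n::{finite,linorder} \<Rightarrow> real" +
  fixes \<sigma> :: "'n clf \<Rightarrow> 'n clf"
  assumes real_structure: "real_structure eps \<sigma>"
begin

abbreviation adj :: "'n clf \<Rightarrow> 'n clf"
  where "adj \<equiv> cl_adj eps \<sigma>"

lemma sigma_add: "\<sigma> (cl_add a b) = cl_add (\<sigma> a) (\<sigma> b)"
  and sigma_scale: "\<sigma> (cl_scale c a) = cl_scale (cnj c) (\<sigma> a)"
  and sigma_mult: "\<sigma> (a \<cdot> b) = \<sigma> a \<cdot> \<sigma> b"
  and sigma_one: "\<sigma> cl_one = cl_one"
  and sigma_sigma [simp]: "\<sigma> (\<sigma> a) = a"
  and sigma_vec: "v \<in> cl_vec \<Longrightarrow> \<sigma> v \<in> cl_vec"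
  using real_structure by (simp_all add: real_structure_def)

lemma sigma_reversion_commute: "\<sigma> (reversion a) = reversion (\<sigma> a)"
proof -
  let ?T = "\<lambda>a. \<sigma> (reversion (\<sigma> a))"
  have lin: "cl_linear ?T"
    by (simp add: cl_linear_def reversion_add reversion_scale sigma_add sigma_scale)
  have "?T = reversion"
  proof (rule cl_linear_basis_ext[OF lin cl_linear_reversion])
    fix S
    have "?T (cl_basis S) = cl_scale (reversion_sign S) (cl_basis S)"
    proof (rule antiautomorphism_basis[OF lin])
      show "?T cl_one = cl_one"
        by (simp add: sigma_one reversion_one)
      show "?T (a \<cdot> b) = ?T b \<cdot> ?T a" for a b
        by (simp add: sigma_mult reversion_mult)
      show "?T v = v" if "v \<in> cl_vec" for v
        using that by (simp add: sigma_vec reversion_vec)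
    qed
    then show "?T (cl_basis S) = reversion (cl_basis S)"
      by (simp add: reversion_basis)
  qed
  from fun_cong[OF this, of "\<sigma> a"] show ?thesis
    by simp
qed

lemma adj_eq: "adj a = \<sigma> (reversion a)"
  by (simp add: cl_adj_def cl_T_eq_reversion)

lemma adj_adj [simp]: "adj (adj a) = a"
  by (simp add: adj_eq sigma_reversion_commute)

lemma adj_add: "adj (cl_add a b) = cl_add (adj a) (adj b)"
  by (simp add: adj_eq reversion_add sigma_add)

lemma adj_scale: "adj (cl_scale c a) = cl_scale (cnj c) (adj a)"
  by (simp add: adj_eq reversion_scale sigma_scale)

lemma adj_mult: "adj (a \<cdot> b) = adj b \<cdot> adj a"
  by (simp add: adj_eq reversion_mult sigma_mult)

lemma adj_one: "adj cl_one = cl_one"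
  by (simp add: adj_eq reversion_one sigma_one)

lemma adj_zero [simp]: "adj cl_zero = cl_zero"
  using adj_scale[of 0 cl_zero] by simp

lemma adj_eq_zero_iff: "adj a = cl_zero \<longleftrightarrow> a = cl_zero"
  by (metis adj_adj adj_zero)

lemma scalar_part_adj: "scalar_part (adj a) = cnj (scalar_part a)"
proof -
  have "(\<lambda>a. cnj (scalar_part (adj a))) = scalar_part"
  proof (rule trace_unique)
    show "cl_linear_form (\<lambda>a. cnj (scalar_part (adj a)))"
      by (simp add: cl_linear_form_def adj_add adj_scale scalar_part_add scalar_part_scale)
    show "cnj (scalar_part (adj (a \<cdot> b))) = cnj (scalar_part (adj (b \<cdot> a)))" for a b
      by (simp add: adj_mult scalar_part_commute[of "adj a"])
    show "cnj (scalar_part (adj cl_one)) = 1"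
      by (simp add: adj_one scalar_part_one)
  qed
  from fun_cong[OF this, of a, THEN arg_cong[where f = cnj]] show ?thesis
    by simp
qed

lemma sigma_prod_eq: "sigma_prod eps \<sigma> a b = scalar_part (adj a \<cdot> b)"
  by (simp add: sigma_prod_def cl_trace_eq_scalar_part)

lemma sigma_prod_hermitian: "sigma_prod eps \<sigma> a b = cnj (sigma_prod eps \<sigma> b a)"
  by (simp add: sigma_prod_eq flip: scalar_part_adj) (simp add: adj_mult)

lemma sigma_prod_add_right:
  "sigma_prod eps \<sigma> a (cl_add b c) = sigma_prod eps \<sigma> a b + sigma_prod eps \<sigma> a c"
  by (simp add: sigma_prod_eq mult_add_right scalar_part_def cl_pointwise)

lemma sigma_prod_scale_right: "sigma_prod eps \<sigma> a (cl_scale c b) = c * sigma_prod eps \<sigma> a b"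
  by (simp add: sigma_prod_eq mult_scale_right scalar_part_def cl_pointwise)

lemma sigma_prod_mult_left: "sigma_prod eps \<sigma> (a \<cdot> b) c = sigma_prod eps \<sigma> b (adj a \<cdot> c)"
  by (simp add: sigma_prod_eq adj_mult mult_assoc)

lemma sigma_prod_spinors_vanish:
  assumes "e \<cdot> adj e = cl_zero"
  shows "sigma_prod eps \<sigma> (x \<cdot> e) (y \<cdot> e) = 0"
proof -
  have "sigma_prod eps \<sigma> (x \<cdot> e) (y \<cdot> e) = scalar_part (adj e \<cdot> (adj x \<cdot> (y \<cdot> e)))"
    by (simp add: sigma_prod_eq adj_mult mult_assoc)
  also have "\<dots> = scalar_part (adj x \<cdot> (y \<cdot> (e \<cdot> adj e)))"
    by (simp add: scalar_part_commute[of "adj e"] mult_assoc)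
  also have "\<dots> = 0"
    using assms by (simp add: scalar_part_def cl_pointwise)
  finally show ?thesis .
qed

context
  fixes e :: "'n clf"
  assumes prim: "primitive_idempotent eps e" and e_adj_e_nonzero: "e \<cdot> adj e \<noteq> cl_zero"
begin

private lemma idem: "e \<cdot> e = e"
  and nonzero: "e \<noteq> cl_zero"
  using primitive_idempotentD[OF prim] by simp_all

lemma mult_adj_unit_nonzero:
  assumes "\<psi> \<noteq> cl_zero" and "\<psi> \<cdot> e = \<psi>"
  shows "\<psi> \<cdot> adj e \<noteq> cl_zero"
proof
  assume z: "\<psi> \<cdot> adj e = cl_zero"
  obtain y where y: "e \<cdot> y \<cdot> \<psi> \<noteq> cl_zero"
    using cl_prime[OF nonzero assms(1)] by blast
  have "in_corner e (e \<cdot> y \<cdot> \<psi>)"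
    using idem assms(2) by (simp add: in_corner_def mult_assoc) (simp add: mult_assoc[symmetric])
  then obtain \<mu> where mu: "e \<cdot> y \<cdot> \<psi> = cl_scale \<mu> e"
    by (rule primitive_corner_eq_scalar[OF prim])
  have "cl_scale \<mu> (e \<cdot> adj e) = e \<cdot> y \<cdot> (\<psi> \<cdot> adj e)"
    by (simp add: mult_assoc[symmetric] mu mult_scale_left)
  then have "cl_scale \<mu> (e \<cdot> adj e) = cl_zero"
    using z by simp
  moreover have "\<mu> \<noteq> 0"
    using y mu by auto
  ultimately show False
    using e_adj_e_nonzero by (simp add: cl_scale_eq_zero_iff)
qed

lemma sigma_prod_nondegenerate:
  assumes psi: "\<psi> \<in> spinor_module eps e"
    and zero: "\<And>\<phi>. \<phi> \<in> spinor_module eps e \<Longrightarrow> sigma_prod eps \<sigma> \<psi> \<phi> = 0"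
  shows "\<psi> = cl_zero"
proof (rule ccontr)
  assume "\<psi> \<noteq> cl_zero"
  then have "\<psi> \<cdot> adj e \<noteq> cl_zero"
    using psi mult_adj_unit_nonzero mem_spinor_module_iff[OF idem] by blast
  moreover have "adj (\<psi> \<cdot> adj e) = e \<cdot> adj \<psi>"
    by (simp add: adj_mult)
  ultimately have "e \<cdot> adj \<psi> \<noteq> cl_zero"
    by (auto simp: adj_eq_zero_iff)
  then obtain b where b: "scalar_part (e \<cdot> adj \<psi> \<cdot> b) \<noteq> 0"
    using scalar_part_nondegenerate by blast
  have "sigma_prod eps \<sigma> \<psi> (b \<cdot> e) = scalar_part (adj \<psi> \<cdot> b \<cdot> e)"
    by (simp add: sigma_prod_eq mult_assoc)
  also have "\<dots> = scalar_part (e \<cdot> (adj \<psi> \<cdot> b))"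
    by (rule scalar_part_commute)
  also have "\<dots> \<noteq> 0"
    using b by (simp add: mult_assoc)
  finally show False
    using zero[of "b \<cdot> e"] by (auto simp: spinor_module_def)
qed

text \<open>The projection \<open>f\<close> is \<open>x / \<mu>\<close> for a nonzero \<open>x = e\<^sup>\<times> y e\<close> with \<open>e x = \<mu> e\<close>.\<close>

lemma ex_self_adjoint_equivalent:
  obtains f where "e \<cdot> f = e" "f \<cdot> e = f" "adj f = f"
proof -
  have "adj e \<noteq> cl_zero"
    using nonzero by (simp add: adj_eq_zero_iff)
  then obtain y where y: "adj e \<cdot> y \<cdot> e \<noteq> cl_zero"
    using cl_prime[OF _ nonzero] by blast
  define x where "x = adj e \<cdot> y \<cdot> e"
  have xe: "x \<cdot> e = x"
    unfolding x_def using idem by (simp add: mult_assoc)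
  have adj_x: "adj x = adj e \<cdot> adj y \<cdot> e"
    unfolding x_def by (simp add: adj_mult mult_assoc)
  then have adj_xe: "adj x \<cdot> e = adj x"
    using idem by (simp add: mult_assoc)
  have "adj x \<cdot> adj e \<noteq> cl_zero"
    using mult_adj_unit_nonzero adj_xe y by (simp add: adj_eq_zero_iff x_def)
  moreover have "adj (e \<cdot> x) = adj x \<cdot> adj e"
    by (rule adj_mult)
  ultimately have "e \<cdot> x \<noteq> cl_zero"
    by (auto simp: adj_eq_zero_iff)
  moreover have "in_corner e (e \<cdot> x)"
    using idem xe by (simp add: in_corner_def mult_assoc) (simp add: mult_assoc[symmetric])
  then obtain \<mu> where mu: "e \<cdot> x = cl_scale \<mu> e"
    by (rule primitive_corner_eq_scalar[OF prim])
  ultimately have "\<mu> \<noteq> 0"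
    by auto
  define f where "f = cl_scale (1 / \<mu>) x"
  have ef: "e \<cdot> f = e"
    unfolding f_def using mu \<open>\<mu> \<noteq> 0\<close> by (simp add: mult_scale_right)
  have fe: "f \<cdot> e = f"
    unfolding f_def using xe by (simp add: mult_scale_left)
  have "adj f \<cdot> e = adj f"
    unfolding f_def using adj_xe by (simp add: adj_scale mult_scale_left)
  then have adj_ff: "adj f \<cdot> f = adj f"
    using ef by (rule right_absorb)
  have "f = adj (adj f \<cdot> f)"
    by (simp add: adj_ff)
  also have "\<dots> = adj f"
    by (subst adj_mult) (simp add: adj_ff)
  finally have "adj f = f"
    by simp
  with ef fe show ?thesis
    using that by blast
qed

lemma ex_self_adjoint_primitive:
  obtains f where "primitive_idempotent eps f" "adj f = f" "spinor_module eps e = spinor_module eps f"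
proof -
  obtain f where ef: "e \<cdot> f = e" and fe: "f \<cdot> e = f" and "adj f = f"
    by (rule ex_self_adjoint_equivalent)
  note equivalent = spinor_module_eq_if_equivalent[OF idem ef fe]
  have "\<exists>\<nu>. f \<cdot> w \<cdot> f = cl_scale \<nu> f" for w
  proof -
    have "in_corner e (e \<cdot> (w \<cdot> f))"
      using idem fe by (simp add: in_corner_def mult_assoc) (simp add: mult_assoc[symmetric])
    then obtain \<nu> where \<nu>: "e \<cdot> (w \<cdot> f) = cl_scale \<nu> e"
      by (rule primitive_corner_eq_scalar[OF prim])
    have "f \<cdot> w \<cdot> f = f \<cdot> (e \<cdot> (w \<cdot> f))"
      using fe by (simp add: mult_assoc[symmetric])
    also have "\<dots> = cl_scale \<nu> f"
      using \<nu> fe by (simp add: mult_scale_right)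
    finally show ?thesis
      by blast
  qed
  moreover have "f \<noteq> cl_zero"
    using ef nonzero by auto
  ultimately have "primitive_idempotent eps f"
    using primitive_if_corner_scalar equivalent(1) by blast
  with \<open>adj f = f\<close> equivalent(2) show ?thesis
    using that by blast
qed

end

lemma self_adjoint_idempotent_unique:
  assumes f0: "f0 \<cdot> f0 = f0" "adj f0 = f0" and f1: "f1 \<cdot> f1 = f1" "adj f1 = f1"
    and same: "spinor_module eps f0 = spinor_module eps f1"
  shows "f0 = f1"
proof -
  have "f0 \<in> spinor_module eps f1" "f1 \<in> spinor_module eps f0"
    using same f0 f1 by (auto simp: mem_spinor_module_iff)
  then have "f0 \<cdot> f1 = f0" "f1 \<cdot> f0 = f1"
    using f0 f1 by (simp_all add: mem_spinor_module_iff)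
  then show ?thesis
    using adj_mult[of f0 f1] f0 f1 by simp
qed

end

text \<open>The binder \<open>\<chi>\<close> of finite Cartesian products would capture the bound variable below.\<close>

unbundle no vec_syntax

theorem proposition11:
  fixes eps :: "'n::{finite,linorder} \<Rightarrow> real"
    and \<sigma> :: "'n clf \<Rightarrow> 'n clf"
    and e :: "'n clf"
  assumes even_dim: "even (card (UNIV :: 'n set))"
    and nondeg: "\<forall>i. eps i = 1 \<or> eps i = -1"
    and rs: "real_structure eps \<sigma>"
    and prim: "primitive_idempotent eps e"
  shows "(cl_mult eps e (cl_adj eps \<sigma> e) = cl_zero \<longrightarrow>
            (\<forall>\<psi>\<in>spinor_module eps e. \<forall>\<phi>\<in>spinor_module eps e. sigma_prod eps \<sigma> \<psi> \<phi> = 0))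
       \<and> (cl_mult eps e (cl_adj eps \<sigma> e) \<noteq> cl_zero \<longrightarrow>
            (\<exists>!f. primitive_idempotent eps f \<and> cl_adj eps \<sigma> f = f \<and>
                  spinor_module eps e = spinor_module eps f)
          \<and> (\<forall>\<psi>\<in>spinor_module eps e. \<forall>\<phi>\<in>spinor_module eps e.
                sigma_prod eps \<sigma> \<psi> \<phi> = cnj (sigma_prod eps \<sigma> \<phi> \<psi>))
          \<and> (\<forall>\<psi>\<in>spinor_module eps e. \<forall>\<phi>\<in>spinor_module eps e. \<forall>\<chi>\<in>spinor_module eps e.
                sigma_prod eps \<sigma> \<psi> (cl_add \<phi> \<chi>) = sigma_prod eps \<sigma> \<psi> \<phi> + sigma_prod eps \<sigma> \<psi> \<chi>)
          \<and> (\<forall>c. \<forall>\<psi>\<in>spinor_module eps e. \<forall>\<phi>\<in>spinor_module eps e.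
                sigma_prod eps \<sigma> \<psi> (cl_scale c \<phi>) = c * sigma_prod eps \<sigma> \<psi> \<phi>)
          \<and> (\<forall>\<psi>\<in>spinor_module eps e.
                (\<forall>\<phi>\<in>spinor_module eps e. sigma_prod eps \<sigma> \<psi> \<phi> = 0) \<longrightarrow> \<psi> = cl_zero)
          \<and> (\<forall>a. \<forall>\<psi>\<in>spinor_module eps e. \<forall>\<phi>\<in>spinor_module eps e.
                sigma_prod eps \<sigma> (cl_mult eps a \<psi>) \<phi> = sigma_prod eps \<sigma> \<psi> (cl_mult eps (cl_adj eps \<sigma> a) \<phi>)))"
proof -
  interpret real_clifford eps \<sigma>
    by unfold_locales (use nondeg even_dim rs in auto)
  show ?thesis
  proof (intro conjI impI)
    assume "e \<cdot> adj e = cl_zero"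
    then show "\<forall>\<psi>\<in>spinor_module eps e. \<forall>\<phi>\<in>spinor_module eps e. sigma_prod eps \<sigma> \<psi> \<phi> = 0"
      using sigma_prod_spinors_vanish by (auto simp: spinor_module_def)
  next
    assume e_adj_e_nonzero: "e \<cdot> adj e \<noteq> cl_zero"
    obtain f where "primitive_idempotent eps f" "adj f = f" "spinor_module eps e = spinor_module eps f"
      by (rule ex_self_adjoint_primitive[OF prim e_adj_e_nonzero])
    then show "\<exists>!f. primitive_idempotent eps f \<and> adj f = f \<and> spinor_module eps e = spinor_module eps f"
      using self_adjoint_idempotent_unique primitive_idempotentD(1) by blast
    show "\<forall>\<psi>\<in>spinor_module eps e. (\<forall>\<phi>\<in>spinor_module eps e. sigma_prod eps \<sigma> \<psi> \<phi> = 0) \<longrightarrow> \<psi> = cl_zero"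
      using sigma_prod_nondegenerate[OF prim e_adj_e_nonzero] by blast
  qed (use sigma_prod_hermitian sigma_prod_add_right sigma_prod_scale_right sigma_prod_mult_left in blast)+
qed

end
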